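(* Let $p_1 = 2, p_2 = 3, p_3 = 5, \dots$ denote the prime numbers listed in increasing order. For real $x, y > 1$ define $$F(x,y) = \sum_{k=1}^{\infty} x^{k-1}\frac{y^{-x^k}}{(1-y^{-x^k})^2}$$ and $$QNC(x,y) = \frac{1}{12xy}\bigl( x(y-1)F(x,y) - y(x-1)F(y,x)\bigr).$$ Let $\mathbf{R} = [\mathbf{R}_{ij}]_{i,j\ge 1}$ be the infinite matrix with entries $\mathbf{R}_{ij} = QNC(p_i, p_j)$. Then $\mathbf{R}$, acting by matrix multiplication on the Hilbert space $\ell_2$ of square-summable complex column vectors, defines a trace class operator on $\ell_2$.
   Context: A bounded operator $\mathbf{A}$ on a Hilbert space is trace class if the positive operator $|\mathbf{A}| = (\mathbf{A}^*\mathbf{A})^{1/2}$ has pure discrete spectrum with summable eigenvalues (equivalently, the singular values of $\mathbf{A}$ are summable). *)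

theory Defs
  imports "HOL-Analysis.Analysis" "HOL-Computational_Algebra.Primes" "HOL-Library.Infinite_Set"
begin

(* The primes in increasing order, 0-indexed: prime_seq 0 = 2, prime_seq 1 = 3, ... *)
definition prime_seq :: "nat \<Rightarrow> nat" where
  "prime_seq = enumerate {p::nat. prime p}"

definition F :: "real \<Rightarrow> real \<Rightarrow> real" where
  "F x y = (\<Sum>k. x ^ k * (y powr (- (x ^ (Suc k)))) / (1 - y powr (- (x ^ (Suc k))))\<^sup>2)"

definition QNC :: "real \<Rightarrow> real \<Rightarrow> real" where
  "QNC x y = (x * (y - 1) * F x y - y * (x - 1) * F y x) / (12 * x * y)"

(* The infinite matrix R, 0-indexed: R i j = QNC(p_{i+1}, p_{j+1}) *)
definition Rmat :: "nat \<Rightarrow> nat \<Rightarrow> complex" where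
  "Rmat i j = complex_of_real (QNC (real (prime_seq i)) (real (prime_seq j)))"

definition l2 :: "(nat \<Rightarrow> complex) set" where
  "l2 = {x. summable (\<lambda>n. (cmod (x n))\<^sup>2)}"

definition l2_inner :: "(nat \<Rightarrow> complex) \<Rightarrow> (nat \<Rightarrow> complex) \<Rightarrow> complex" where
  "l2_inner x y = (\<Sum>n. x n * cnj (y n))"

definition l2_norm :: "(nat \<Rightarrow> complex) \<Rightarrow> real" where
  "l2_norm x = sqrt (\<Sum>n. (cmod (x n))\<^sup>2)"

definition l2_bounded_op :: "((nat \<Rightarrow> complex) \<Rightarrow> (nat \<Rightarrow> complex)) \<Rightarrow> bool" where
  "l2_bounded_op A \<longleftrightarrow>
     (\<forall>x\<in>l2. A x \<in> l2) \<and>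
     (\<forall>x\<in>l2. \<forall>y\<in>l2. \<forall>a b::complex. A (\<lambda>n. a * x n + b * y n) = (\<lambda>n. a * A x n + b * A y n)) \<and>
     (\<exists>C. \<forall>x\<in>l2. l2_norm (A x) \<le> C * l2_norm x)"

definition l2_adjoint :: "((nat \<Rightarrow> complex) \<Rightarrow> (nat \<Rightarrow> complex)) \<Rightarrow> ((nat \<Rightarrow> complex) \<Rightarrow> (nat \<Rightarrow> complex)) \<Rightarrow> bool" where
  "l2_adjoint A B \<longleftrightarrow> l2_bounded_op B \<and> (\<forall>x\<in>l2. \<forall>y\<in>l2. l2_inner (A x) y = l2_inner x (B y))"

definition l2_positive :: "((nat \<Rightarrow> complex) \<Rightarrow> (nat \<Rightarrow> complex)) \<Rightarrow> bool" where
  "l2_positive P \<longleftrightarrow> l2_bounded_op P \<and> (\<forall>x\<in>l2. \<forall>y\<in>l2. l2_inner (P x) y = l2_inner x (P y))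
      \<and> (\<forall>x\<in>l2. l2_inner (P x) x \<in> \<real> \<and> Re (l2_inner (P x) x) \<ge> 0)"

(* |A| = (A^* A)^(1/2): the (unique) positive operator P with P P = A^* A *)
definition l2_abs_op :: "((nat \<Rightarrow> complex) \<Rightarrow> (nat \<Rightarrow> complex)) \<Rightarrow> ((nat \<Rightarrow> complex) \<Rightarrow> (nat \<Rightarrow> complex)) \<Rightarrow> bool" where
  "l2_abs_op A P \<longleftrightarrow> l2_positive P \<and>
     (\<exists>B. l2_adjoint A B \<and> (\<forall>x\<in>l2. P (P x) = B (A x)))"

(* orthonormal basis of l_2 (l_2 is separable, so indexed by nat) *)
definition l2_onb :: "(nat \<Rightarrow> (nat \<Rightarrow> complex)) \<Rightarrow> bool" where
  "l2_onb e \<longleftrightarrow> (\<forall>n. e n \<in> l2) \<and> (\<forall>m n. l2_inner (e m) (e n) = (if m = n then 1 else 0))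
      \<and> (\<forall>x\<in>l2. (\<forall>n. l2_inner x (e n) = 0) \<longrightarrow> x = (\<lambda>_. 0))"

(* A positive operator P has pure discrete spectrum with summable eigenvalues
   (counted with multiplicity): l_2 has an orthonormal basis of eigenvectors of P
   whose eigenvalues are summable. *)
definition l2_discrete_summable :: "((nat \<Rightarrow> complex) \<Rightarrow> (nat \<Rightarrow> complex)) \<Rightarrow> bool" where
  "l2_discrete_summable P \<longleftrightarrow>
     (\<exists>e ev. l2_onb e \<and> (\<forall>n. P (e n) = (\<lambda>i. complex_of_real (ev n) * e n i)) \<and> summable ev)"

definition trace_class :: "((nat \<Rightarrow> complex) \<Rightarrow> (nat \<Rightarrow> complex)) \<Rightarrow> bool" where
  "trace_class A \<longleftrightarrow> l2_bounded_op A \<and>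
     (\<exists>P. l2_abs_op A P \<and> l2_discrete_summable P)"

definition matrix_op :: "(nat \<Rightarrow> nat \<Rightarrow> complex) \<Rightarrow> (nat \<Rightarrow> complex) \<Rightarrow> (nat \<Rightarrow> complex)" where
  "matrix_op M x = (\<lambda>i. \<Sum>j. M i j * x j)"

end

(*
  Every entry of R is tiny: for primes p and q the series F(p, q) is dominated by a geometric
  series, so |QNC(p, q)| <= q^-p + p^-q, and as the i-th prime is at least i + 2 this gives
  |R_ij| <= c_i c_j with c_n = (n + 2)^-2 + 2^-n summable. Hence R is absolutely summable, and
  every absolutely summable matrix A is trace class.

  Such an A is bounded, its adjoint is the conjugate transpose, and it maps bounded
  coordinatewise convergent sequences to norm convergent ones. So the Rayleigh quotient
  |A x|^2 / |x|^2 attains its maximum on every weakly closed subspace, and a maximiser on the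
  orthogonal complement of previously found eigenvectors of A* A is again one. Interleaving
  these steps with unit kernel vectors that absorb one coordinate at a time produces an
  orthonormal basis (e_n) of eigenvectors of A* A. By Cauchy-Schwarz,
  sum_n |<A u_n, v_n>| <= sum_ij |A_ij| for any two finite orthonormal families, so the
  singular values s_n = |A e_n| are summable, and |A| is the diagonal operator
  x |-> sum_n s_n <x, e_n> e_n.
*)

theory Submission
  imports Defs
begin

lemma suminf_ge_term:
  fixes f :: "nat \<Rightarrow> real"
  assumes "summable f" "\<And>n. 0 \<le> f n"
  shows "f j \<le> suminf f"
  using sum_le_suminf[OF assms(1), of "{j}"] assms(2) by simp

lemma suminf_delta: "(\<Sum>n. if n = m then a else 0) = (a :: 'a::real_normed_vector)"
  by (subst suminf_finite[of "{m}"]) auto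

lemma summable_cnj_iff: "summable (\<lambda>n. cnj (f n)) \<longleftrightarrow> summable f"
  unfolding summable_def by (metis sums_cnj complex_cnj_cnj)

lemma suminf_cnj: "summable f \<Longrightarrow> cnj (suminf f) = (\<Sum>n. cnj (f n))"
  by (metis summable_sums sums_cnj sums_unique)

lemma infsum_eq_suminf_of_norm_summable:
  fixes f :: "nat \<Rightarrow> 'a::banach"
  assumes "summable (\<lambda>n. norm (f n))"
  shows "infsum f UNIV = (\<Sum>n. f n)"
  using assms by (intro infsumI norm_summable_imp_has_sum summable_sums[OF summable_norm_cancel])

lemma summable_column_norms:
  fixes f :: "nat \<Rightarrow> nat \<Rightarrow> 'a::real_normed_vector"
  assumes rows: "\<And>i. summable (\<lambda>j. norm (f i j))"
    and total: "summable (\<lambda>i. \<Sum>j. norm (f i j))"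
  shows "summable (\<lambda>i. norm (f i j))"
    and "summable (\<lambda>j. \<Sum>i. norm (f i j))"
proof -
  show columns: "summable (\<lambda>i. norm (f i j))" for j
    by (rule summable_comparison_test'[OF total])
      (use suminf_ge_term[OF rows] in simp)
  show "summable (\<lambda>j. \<Sum>i. norm (f i j))"
  proof (rule bounded_imp_summable)
    show "0 \<le> (\<Sum>i. norm (f i j))" for j
      using columns by (simp add: suminf_nonneg)
    fix n
    have "(\<Sum>j\<le>n. \<Sum>i. norm (f i j)) = (\<Sum>i. \<Sum>j\<le>n. norm (f i j))"
      using columns by (simp add: suminf_sum)
    also have "\<dots> \<le> (\<Sum>i. \<Sum>j. norm (f i j))"
      using rows total columns by (intro suminf_le sum_le_suminf summable_sum) auto
    finally show "(\<Sum>j\<le>n. \<Sum>i. norm (f i j)) \<le> (\<Sum>i. \<Sum>j. norm (f i j))" .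
  qed
qed

lemma abs_summable_double_suminf_swap:
  fixes f :: "nat \<Rightarrow> nat \<Rightarrow> complex"
  assumes rows: "\<And>i. summable (\<lambda>j. norm (f i j))"
    and total: "summable (\<lambda>i. \<Sum>j. norm (f i j))"
  shows "(\<Sum>i. \<Sum>j. f i j) = (\<Sum>j. \<Sum>i. f i j)"
proof -
  note columns = summable_column_norms[OF rows total]
  have "(\<lambda>x. norm ((\<lambda>(i, j). f i j) x)) summable_on UNIV \<times> UNIV"
  proof (rule iffD2[OF Infinite_Sum.abs_summable_on_Sigma_iff[where A = UNIV and B = "\<lambda>_. UNIV"]],
      intro conjI ballI)
    show "(\<lambda>j. norm ((\<lambda>(i, j). f i j) (i, j))) summable_on UNIV" for i
      using norm_summable_imp_summable_on[of "\<lambda>j. norm (f i j)"] rows[of i] by simp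
    have "summable (\<lambda>i. norm (norm (\<Sum>j. norm (f i j))))"
      using total rows by (simp add: suminf_nonneg)
    then have "(\<lambda>i. norm (\<Sum>j. norm (f i j))) summable_on UNIV"
      by (rule norm_summable_imp_summable_on)
    moreover have "infsum (\<lambda>j. norm (f i j)) UNIV = (\<Sum>j. norm (f i j))" for i
      using infsum_eq_suminf_of_norm_summable[of "\<lambda>j. norm (f i j)"] rows[of i] by simp
    ultimately show "(\<lambda>i. norm (\<Sum>\<^sub>\<infinity>j\<in>UNIV. norm ((\<lambda>(i, j). f i j) (i, j)))) summable_on UNIV"
      by simp
  qed
  then have "infsum (\<lambda>i. infsum (f i) UNIV) UNIV = infsum (\<lambda>j. infsum (\<lambda>i. f i j) UNIV) UNIV"
    by (rule infsum_swap_banach[OF abs_summable_summable])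
  moreover have "infsum (f i) UNIV = (\<Sum>j. f i j)" for i
    using infsum_eq_suminf_of_norm_summable[OF rows] .
  moreover have "infsum (\<lambda>i. f i j) UNIV = (\<Sum>i. f i j)" for j
    using infsum_eq_suminf_of_norm_summable[OF columns(1)] .
  ultimately have "infsum (\<lambda>i. \<Sum>j. f i j) UNIV = infsum (\<lambda>j. \<Sum>i. f i j) UNIV"
    by simp
  moreover have "summable (\<lambda>i. norm (\<Sum>j. f i j))"
    by (rule summable_comparison_test'[OF total]) (use rows in \<open>simp add: summable_norm\<close>)
  moreover have "summable (\<lambda>j. norm (\<Sum>i. f i j))"
    by (rule summable_comparison_test'[OF columns(2)]) (use columns(1) in \<open>simp add: summable_norm\<close>)
  ultimately show ?thesis
    by (simp add: infsum_eq_suminf_of_norm_summable)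
qed

section \<open>The sequence space \<open>l2\<close>\<close>

lemma l2_norm_nonneg: "x \<in> l2 \<Longrightarrow> 0 \<le> l2_norm x"
  unfolding l2_norm_def l2_def by (simp add: suminf_nonneg)

lemma l2_norm_square: "x \<in> l2 \<Longrightarrow> (l2_norm x)\<^sup>2 = (\<Sum>n. (cmod (x n))\<^sup>2)"
  unfolding l2_norm_def l2_def by (simp add: suminf_nonneg)

lemma l2_coord_le: "x \<in> l2 \<Longrightarrow> cmod (x j) \<le> l2_norm x"
  using suminf_ge_term[of "\<lambda>n. (cmod (x n))\<^sup>2" j] l2_norm_nonneg[of x]
  by (simp add: l2_norm_square[symmetric] l2_def power2_le_iff_abs_le)

lemma l2_partial_sum_le: "x \<in> l2 \<Longrightarrow> (\<Sum>j<N. (cmod (x j))\<^sup>2) \<le> (l2_norm x)\<^sup>2"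
  by (simp add: l2_norm_square sum_le_suminf l2_def)

lemma l2_lincomb:
  assumes "x \<in> l2" "y \<in> l2"
  shows "(\<lambda>n. a * x n + b * y n) \<in> l2"
proof -
  have "(cmod (a * x n + b * y n))\<^sup>2 \<le> 2 * (cmod a)\<^sup>2 * (cmod (x n))\<^sup>2 + 2 * (cmod b)\<^sup>2 * (cmod (y n))\<^sup>2"
    for n
  proof -
    have "cmod (a * x n + b * y n) \<le> cmod a * cmod (x n) + cmod b * cmod (y n)"
      using norm_triangle_ineq[of "a * x n" "b * y n"] by (simp add: norm_mult)
    then have "(cmod (a * x n + b * y n))\<^sup>2 \<le> (cmod a * cmod (x n) + cmod b * cmod (y n))\<^sup>2"
      by (rule power_mono) simp
    also have "\<dots> \<le> 2 * (cmod a * cmod (x n))\<^sup>2 + 2 * (cmod b * cmod (y n))\<^sup>2"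
      using sum_squares_bound[of "cmod a * cmod (x n)" "cmod b * cmod (y n)"]
      unfolding power2_sum by linarith
    finally show ?thesis
      by (simp add: power_mult_distrib)
  qed
  moreover have "summable (\<lambda>n. 2 * (cmod a)\<^sup>2 * (cmod (x n))\<^sup>2 + 2 * (cmod b)\<^sup>2 * (cmod (y n))\<^sup>2)"
    using assms unfolding l2_def by (intro summable_add summable_mult) auto
  ultimately show ?thesis
    unfolding l2_def by (auto intro: summable_comparison_test')
qed

lemma l2_zero [simp]: "(\<lambda>_. 0) \<in> l2"
  by (simp add: l2_def)

lemma l2_norm_zero [simp]: "l2_norm (\<lambda>_. 0) = 0"
  by (simp add: l2_norm_def)

lemma l2_scale: "x \<in> l2 \<Longrightarrow> (\<lambda>n. a * x n) \<in> l2"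
  using l2_lincomb[of x x a 0] by simp

lemma l2_add: "x \<in> l2 \<Longrightarrow> y \<in> l2 \<Longrightarrow> (\<lambda>n. x n + y n) \<in> l2"
  using l2_lincomb[of x y 1 1] by simp

lemma l2_diff: "x \<in> l2 \<Longrightarrow> y \<in> l2 \<Longrightarrow> (\<lambda>n. x n - y n) \<in> l2"
  using l2_lincomb[of x y 1 "-1"] by simp

lemma l2_sum: "finite I \<Longrightarrow> (\<And>m. m \<in> I \<Longrightarrow> f m \<in> l2) \<Longrightarrow> (\<lambda>i. \<Sum>m\<in>I. f m i) \<in> l2"
  by (induction I rule: finite_induct) (simp_all add: l2_add)

lemma l2_finite_support: "(\<And>n. N \<le> n \<Longrightarrow> x n = 0) \<Longrightarrow> x \<in> l2"
  unfolding l2_def mem_Collect_eq by (rule summable_finite[of "{..<N}"]) (simp_all add: not_less)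

definition delta :: "nat \<Rightarrow> nat \<Rightarrow> complex" where
  "delta c = (\<lambda>n. if n = c then 1 else 0)"

lemma delta_l2: "delta c \<in> l2"
  by (rule l2_finite_support[of "Suc c"]) (simp add: delta_def)

lemma l2_cauchy_schwarz:
  assumes "x \<in> l2" "y \<in> l2"
  shows "summable (\<lambda>n. cmod (x n) * cmod (y n))"
    and "(\<Sum>n. cmod (x n) * cmod (y n)) \<le> l2_norm x * l2_norm y"
proof -
  show summable: "summable (\<lambda>n. cmod (x n) * cmod (y n))"
  proof (rule summable_comparison_test')
    show "summable (\<lambda>n. (cmod (x n))\<^sup>2 + (cmod (y n))\<^sup>2)"
      using assms by (auto simp: l2_def intro!: summable_add)
    show "norm (cmod (x n) * cmod (y n)) \<le> (cmod (x n))\<^sup>2 + (cmod (y n))\<^sup>2" for n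
    proof -
      have "norm (cmod (x n) * cmod (y n)) = cmod (x n) * cmod (y n)" "0 \<le> cmod (x n) * cmod (y n)"
        by simp_all
      then show ?thesis
        using sum_squares_bound[of "cmod (x n)" "cmod (y n)", unfolded mult.assoc] by linarith
    qed
  qed
  have partial: "L2_set (\<lambda>n. cmod (z n)) {..<N} \<le> l2_norm z" if "z \<in> l2" for z N
    unfolding L2_set_def l2_norm_def
    using that by (intro real_sqrt_le_mono sum_le_suminf) (auto simp: l2_def)
  show "(\<Sum>n. cmod (x n) * cmod (y n)) \<le> l2_norm x * l2_norm y"
  proof (rule suminf_le_const[OF summable])
    fix N
    have "(\<Sum>n<N. cmod (x n) * cmod (y n)) = (\<Sum>n<N. \<bar>cmod (x n)\<bar> * \<bar>cmod (y n)\<bar>)"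
      by simp
    also have "\<dots> \<le> L2_set (\<lambda>n. cmod (x n)) {..<N} * L2_set (\<lambda>n. cmod (y n)) {..<N}"
      by (rule L2_set_mult_ineq)
    also have "\<dots> \<le> l2_norm x * l2_norm y"
      using assms by (intro mult_mono partial) (auto simp: l2_norm_nonneg)
    finally show "(\<Sum>n<N. cmod (x n) * cmod (y n)) \<le> l2_norm x * l2_norm y" .
  qed
qed

lemma l2_inner_summable:
  assumes "x \<in> l2" "y \<in> l2"
  shows "summable (\<lambda>n. norm (x n * cnj (y n)))" "summable (\<lambda>n. x n * cnj (y n))"
  using l2_cauchy_schwarz(1)[OF assms] by (auto simp: norm_mult intro: summable_norm_cancel)

lemma l2_inner_bound:
  assumes "x \<in> l2" "y \<in> l2"
  shows "cmod (l2_inner x y) \<le> l2_norm x * l2_norm y"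
proof -
  have "cmod (l2_inner x y) \<le> (\<Sum>n. norm (x n * cnj (y n)))"
    unfolding l2_inner_def by (rule summable_norm[OF l2_inner_summable(1)[OF assms]])
  also have "\<dots> \<le> l2_norm x * l2_norm y"
    using l2_cauchy_schwarz(2)[OF assms] by (simp add: norm_mult)
  finally show ?thesis .
qed

lemma l2_inner_self: "x \<in> l2 \<Longrightarrow> l2_inner x x = complex_of_real ((l2_norm x)\<^sup>2)"
proof -
  assume x: "x \<in> l2"
  have "l2_inner x x = (\<Sum>n. complex_of_real ((cmod (x n))\<^sup>2))"
    unfolding l2_inner_def by (simp only: complex_norm_square)
  also have "\<dots> = complex_of_real ((l2_norm x)\<^sup>2)"
    using x by (simp add: suminf_of_real l2_def l2_norm_square)
  finally show ?thesis .
qed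

lemma l2_inner_lincomb_left:
  assumes "x \<in> l2" "y \<in> l2" "z \<in> l2"
  shows "l2_inner (\<lambda>n. a * x n + b * y n) z = a * l2_inner x z + b * l2_inner y z"
proof -
  have "l2_inner (\<lambda>n. a * x n + b * y n) z = (\<Sum>n. a * (x n * cnj (z n)) + b * (y n * cnj (z n)))"
    unfolding l2_inner_def by (simp add: algebra_simps)
  also have "\<dots> = a * l2_inner x z + b * l2_inner y z"
    unfolding l2_inner_def
    using l2_inner_summable(2)[OF assms(1,3)] l2_inner_summable(2)[OF assms(2,3)]
    by (simp add: suminf_add[symmetric] summable_mult suminf_mult)
  finally show ?thesis .
qed

lemma l2_inner_zero_left [simp]: "l2_inner (\<lambda>_. 0) y = 0"
  by (simp add: l2_inner_def)

lemma l2_inner_cnj: "x \<in> l2 \<Longrightarrow> y \<in> l2 \<Longrightarrow> cnj (l2_inner x y) = l2_inner y x"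
  unfolding l2_inner_def by (simp add: suminf_cnj l2_inner_summable mult.commute)

lemma l2_inner_lincomb_right:
  assumes "x \<in> l2" "y \<in> l2" "z \<in> l2"
  shows "l2_inner z (\<lambda>n. a * x n + b * y n) = cnj a * l2_inner z x + cnj b * l2_inner z y"
  using l2_inner_lincomb_left[OF assms, of a b]
  by (metis (no_types, lifting) assms complex_cnj_add complex_cnj_mult l2_inner_cnj l2_lincomb)

lemma l2_inner_scale_left: "x \<in> l2 \<Longrightarrow> y \<in> l2 \<Longrightarrow> l2_inner (\<lambda>i. a * x i) y = a * l2_inner x y"
  using l2_inner_lincomb_left[of x x y a 0] by simp

lemma l2_inner_scale_right: "x \<in> l2 \<Longrightarrow> y \<in> l2 \<Longrightarrow> l2_inner y (\<lambda>i. a * x i) = cnj a * l2_inner y x"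
  using l2_inner_lincomb_right[of x x y a 0] by simp

lemma l2_inner_diff_left:
  "x \<in> l2 \<Longrightarrow> y \<in> l2 \<Longrightarrow> z \<in> l2 \<Longrightarrow> l2_inner (\<lambda>i. x i - y i) z = l2_inner x z - l2_inner y z"
  using l2_inner_lincomb_left[of x y z 1 "-1"] by simp

lemma l2_inner_sum_left:
  assumes "finite I" "\<And>m. m \<in> I \<Longrightarrow> f m \<in> l2" "y \<in> l2"
  shows "l2_inner (\<lambda>i. \<Sum>m\<in>I. f m i) y = (\<Sum>m\<in>I. l2_inner (f m) y)"
  using assms
proof (induction I rule: finite_induct)
  case (insert a I)
  then show ?case
    using l2_inner_lincomb_left[of "f a" "\<lambda>i. \<Sum>m\<in>I. f m i" y 1 1] by (simp add: l2_sum)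
qed (simp add: l2_inner_def)

lemma l2_inner_sum_right:
  assumes "finite I" "\<And>m. m \<in> I \<Longrightarrow> f m \<in> l2" "y \<in> l2"
  shows "l2_inner y (\<lambda>i. \<Sum>m\<in>I. f m i) = (\<Sum>m\<in>I. l2_inner y (f m))"
proof -
  have "l2_inner y (\<lambda>i. \<Sum>m\<in>I. f m i) = cnj (\<Sum>m\<in>I. l2_inner (f m) y)"
    using l2_inner_sum_left[OF assms] l2_inner_cnj[OF l2_sum[OF assms(1,2)] assms(3)] by simp
  also have "\<dots> = (\<Sum>m\<in>I. l2_inner y (f m))"
    using assms(2,3) by (simp add: l2_inner_cnj)
  finally show ?thesis .
qed

lemma l2_norm_eq_zero: "x \<in> l2 \<Longrightarrow> l2_norm x = 0 \<Longrightarrow> x = (\<lambda>_. 0)"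
  using suminf_eq_zero_iff[of "\<lambda>n. (cmod (x n))\<^sup>2"]
  by (auto simp: l2_norm_square[symmetric] l2_def)

lemma l2_inner_self_eq_zero: "x \<in> l2 \<Longrightarrow> l2_inner x x = 0 \<Longrightarrow> x = (\<lambda>_. 0)"
  using l2_inner_self l2_norm_eq_zero by fastforce

lemma l2_norm_eq_one:
  assumes "x \<in> l2" "l2_inner x x = 1"
  shows "l2_norm x = 1"
proof -
  have "(l2_norm x)\<^sup>2 = 1"
    using l2_inner_self[OF assms(1)] assms(2) of_real_eq_1_iff by metis
  then show ?thesis
    using l2_norm_nonneg[OF assms(1)] by (simp add: power2_eq_1_iff)
qed

lemma l2_inner_delta_right: "l2_inner x (delta c) = x c"
  unfolding l2_inner_def delta_def by (subst suminf_finite[of "{c}"]) auto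

lemma l2_inner_delta_left: "y \<in> l2 \<Longrightarrow> l2_inner (delta c) y = cnj (y c)"
  using l2_inner_cnj[OF _ delta_l2, of y c] l2_inner_delta_right[of y c] by simp

lemma l2_norm_delta: "l2_norm (delta c) = 1"
  using l2_inner_delta_right[of "delta c" c] by (intro l2_norm_eq_one delta_l2) (simp add: delta_def)

lemma l2_norm_scale:
  assumes "x \<in> l2"
  shows "l2_norm (\<lambda>n. a * x n) = cmod a * l2_norm x"
proof -
  have "(l2_norm (\<lambda>n. a * x n))\<^sup>2 = (\<Sum>n. (cmod a)\<^sup>2 * (cmod (x n))\<^sup>2)"
    using l2_norm_square[OF l2_scale[OF assms]] by (simp add: norm_mult power_mult_distrib)
  also have "\<dots> = (cmod a * l2_norm x)\<^sup>2"
    using assms by (simp add: suminf_mult l2_def l2_norm_square power_mult_distrib)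
  finally show ?thesis
    using l2_norm_nonneg[OF l2_scale[OF assms]] l2_norm_nonneg[OF assms]
    by (simp add: power2_eq_iff_nonneg)
qed

lemma l2_norm_add_scaled_square:
  assumes u: "u \<in> l2" and v: "v \<in> l2"
  shows "(l2_norm (\<lambda>i. u i + complex_of_real t * v i))\<^sup>2
    = (l2_norm u)\<^sup>2 + 2 * t * Re (l2_inner u v) + t\<^sup>2 * (l2_norm v)\<^sup>2"
proof -
  let ?w = "\<lambda>i. u i + complex_of_real t * v i"
  have w: "?w \<in> l2"
    using l2_lincomb[OF u v, of 1] by simp
  have "l2_inner ?w ?w = l2_inner u u + complex_of_real t * l2_inner u v
      + complex_of_real t * (l2_inner v u + complex_of_real t * l2_inner v v)"
    using l2_inner_lincomb_left[OF u v w, of 1 "complex_of_real t"]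
      l2_inner_lincomb_right[OF u v u, of 1 "complex_of_real t"]
      l2_inner_lincomb_right[OF u v v, of 1 "complex_of_real t"]
    by (simp add: algebra_simps)
  moreover have "l2_inner v u = cnj (l2_inner u v)"
    using l2_inner_cnj[OF u v] by simp
  ultimately have "Re (l2_inner ?w ?w) = (l2_norm u)\<^sup>2 + 2 * t * Re (l2_inner u v) + t\<^sup>2 * (l2_norm v)\<^sup>2"
    using l2_inner_self[OF u] l2_inner_self[OF v] by (simp add: power2_eq_square algebra_simps)
  then show ?thesis
    using l2_inner_self[OF w] by simp
qed

lemma le_square_of_le_mult_sqrt:
  fixes S K :: real
  assumes "0 \<le> S" "S \<le> K * sqrt S"
  shows "S \<le> K\<^sup>2"
proof (cases "S = 0")
  case False
  have "sqrt S * sqrt S \<le> K * sqrt S"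
    using assms by simp
  moreover have "0 < sqrt S"
    using False assms(1) by simp
  ultimately have "sqrt S \<le> K"
    by (rule mult_right_le_imp_le)
  then have "(sqrt S)\<^sup>2 \<le> K\<^sup>2"
    by (rule power_mono) (use assms(1) in simp)
  then show ?thesis
    using assms(1) by simp
qed simp

lemma l2_of_bounded_partial_sums:
  assumes partial: "\<And>N. (\<Sum>i<N. (cmod (x i))\<^sup>2) \<le> K\<^sup>2" and "0 \<le> K"
  shows "x \<in> l2" and "l2_norm x \<le> K"
proof -
  show x: "x \<in> l2"
    unfolding l2_def mem_Collect_eq
    by (rule bounded_imp_summable[of _ "K\<^sup>2"]) (use partial[of "Suc _"] in \<open>simp_all add: lessThan_Suc_atMost\<close>)
  have "(l2_norm x)\<^sup>2 \<le> K\<^sup>2"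
    using x partial by (simp add: l2_norm_square suminf_le_const l2_def)
  then show "l2_norm x \<le> K"
    using \<open>0 \<le> K\<close> by (simp add: power2_le_iff_abs_le)
qed

definition truncate :: "nat \<Rightarrow> (nat \<Rightarrow> complex) \<Rightarrow> nat \<Rightarrow> complex" where
  "truncate N x = (\<lambda>j. if j < N then x j else 0)"

lemma truncate_l2: "truncate N x \<in> l2"
  by (rule l2_finite_support[of N]) (simp add: truncate_def)

lemma l2_inner_truncate: "l2_inner x (truncate N y) = (\<Sum>j<N. x j * cnj (y j))"
  unfolding l2_inner_def truncate_def by (subst suminf_finite[of "{..<N}"]) auto

lemma l2_norm_truncate: "(l2_norm (truncate N x))\<^sup>2 = (\<Sum>j<N. (cmod (x j))\<^sup>2)"
proof -
  have "(l2_norm (truncate N x))\<^sup>2 = (\<Sum>j. (cmod (truncate N x j))\<^sup>2)"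
    by (rule l2_norm_square[OF truncate_l2])
  also have "\<dots> = (\<Sum>j<N. (cmod (x j))\<^sup>2)"
    unfolding truncate_def by (subst suminf_finite[of "{..<N}"]) auto
  finally show ?thesis .
qed

lemma l2_norm_tail_tendsto_zero:
  assumes "x \<in> l2"
  shows "(\<lambda>N. l2_norm (\<lambda>j. x j - truncate N x j)) \<longlonglongrightarrow> 0"
proof -
  let ?f = "\<lambda>j. (cmod (x j))\<^sup>2"
  have "(\<lambda>j. (cmod (x j - truncate N x j))\<^sup>2) sums ((\<Sum>j. ?f j) - (\<Sum>j<N. ?f j))" for N
  proof -
    have "(\<lambda>j. if j \<in> {..<N} then 0 else ?f j) sums ((\<Sum>j. ?f j) - (\<Sum>j<N. ?f j))"
      using assms by (intro sums_If_finite_set') (simp_all add: l2_def sum_negf summable_sums)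
    then show ?thesis
      by (rule sums_cong[THEN iffD1, rotated]) (simp add: truncate_def)
  qed
  then have "l2_norm (\<lambda>j. x j - truncate N x j) = sqrt ((\<Sum>j. ?f j) - (\<Sum>j<N. ?f j))" for N
    unfolding l2_norm_def by (simp add: sums_iff)
  moreover have "(\<lambda>N. sqrt ((\<Sum>j. ?f j) - (\<Sum>j<N. ?f j))) \<longlonglongrightarrow> sqrt ((\<Sum>j. ?f j) - (\<Sum>j. ?f j))"
    using assms by (intro tendsto_real_sqrt tendsto_diff tendsto_const summable_LIMSEQ) (simp add: l2_def)
  ultimately show ?thesis
    by simp
qed

definition orthonormal_on :: "(nat \<Rightarrow> nat \<Rightarrow> complex) \<Rightarrow> nat set \<Rightarrow> bool" where
  "orthonormal_on E I \<longleftrightarrow> (\<forall>m\<in>I. E m \<in> l2)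
     \<and> (\<forall>m\<in>I. \<forall>m'\<in>I. l2_inner (E m) (E m') = (if m = m' then 1 else 0))"

lemma orthonormal_on_subset: "orthonormal_on E I \<Longrightarrow> J \<subseteq> I \<Longrightarrow> orthonormal_on E J"
  unfolding orthonormal_on_def by blast

lemma orthonormal_on_l2: "orthonormal_on E I \<Longrightarrow> m \<in> I \<Longrightarrow> E m \<in> l2"
  unfolding orthonormal_on_def by blast

lemma orthonormal_on_norm: "orthonormal_on E I \<Longrightarrow> m \<in> I \<Longrightarrow> l2_norm (E m) = 1"
  unfolding orthonormal_on_def by (simp add: l2_norm_eq_one)

lemma l2_inner_orthonormal_sum:
  assumes "finite I" "orthonormal_on E I" "k \<in> I"
  shows "l2_inner (\<lambda>i. \<Sum>m\<in>I. c m * E m i) (E k) = c k"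
proof -
  have "l2_inner (\<lambda>i. \<Sum>m\<in>I. c m * E m i) (E k) = (\<Sum>m\<in>I. c m * l2_inner (E m) (E k))"
    using assms by (simp add: l2_inner_sum_left l2_inner_scale_left l2_scale orthonormal_on_l2)
  also have "\<dots> = (\<Sum>m\<in>I. if m = k then c k else 0)"
    using assms(2,3) unfolding orthonormal_on_def by (intro sum.cong) auto
  finally show ?thesis
    using assms(1,3) by simp
qed

lemma bessel_inequality_finite:
  assumes "finite I" "orthonormal_on E I" "v \<in> l2"
  shows "(\<Sum>m\<in>I. (cmod (l2_inner v (E m)))\<^sup>2) \<le> (l2_norm v)\<^sup>2"
proof -
  define S where "S = (\<Sum>m\<in>I. (cmod (l2_inner v (E m)))\<^sup>2)"
  define u where "u = (\<lambda>i. \<Sum>m\<in>I. l2_inner v (E m) * E m i)"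
  have u: "u \<in> l2"
    unfolding u_def using assms by (intro l2_sum l2_scale) (auto simp: orthonormal_on_l2)
  have "l2_inner u u = (\<Sum>m\<in>I. l2_inner v (E m) * l2_inner (E m) u)"
    using assms u by (simp add: u_def l2_inner_sum_left l2_inner_scale_left l2_scale orthonormal_on_l2)
  also have "\<dots> = (\<Sum>m\<in>I. l2_inner v (E m) * cnj (l2_inner v (E m)))"
  proof (rule sum.cong[OF refl])
    fix m
    assume m: "m \<in> I"
    then have "l2_inner (E m) u = cnj (l2_inner u (E m))"
      using l2_inner_cnj[OF u] assms(2) by (simp add: orthonormal_on_l2)
    then show "l2_inner v (E m) * l2_inner (E m) u = l2_inner v (E m) * cnj (l2_inner v (E m))"
      using l2_inner_orthonormal_sum[OF assms(1,2) m] by (simp add: u_def)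
  qed
  also have "\<dots> = complex_of_real S"
    unfolding S_def of_real_sum by (simp only: complex_norm_square)
  finally have "(l2_norm u)\<^sup>2 = S"
    using l2_inner_self[OF u] of_real_eq_iff by metis
  have "l2_inner v u = (\<Sum>m\<in>I. cnj (l2_inner v (E m)) * l2_inner v (E m))"
    unfolding u_def using assms
    by (simp add: l2_inner_sum_right l2_inner_scale_right l2_scale orthonormal_on_l2)
  also have "\<dots> = complex_of_real S"
    unfolding S_def of_real_sum by (simp only: complex_norm_square mult.commute)
  finally have "S \<le> l2_norm v * l2_norm u"
    using l2_inner_bound[OF assms(3) u] by simp
  also have "\<dots> = l2_norm v * sqrt S"
    using \<open>(l2_norm u)\<^sup>2 = S\<close> l2_norm_nonneg[OF u] by (metis real_sqrt_abs abs_of_nonneg)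
  finally show ?thesis
    using le_square_of_le_mult_sqrt[of S] by (simp add: S_def sum_nonneg)
qed

lemma orthonormal_on_coord_square_sum_le:
  assumes "finite I" "orthonormal_on E I"
  shows "(\<Sum>m\<in>I. (cmod (E m j))\<^sup>2) \<le> 1"
  using bessel_inequality_finite[OF assms delta_l2, of j] assms(2)
  by (simp add: l2_inner_delta_left l2_norm_delta orthonormal_on_l2)

definition l2_normalize :: "(nat \<Rightarrow> complex) \<Rightarrow> nat \<Rightarrow> complex" where
  "l2_normalize x = (\<lambda>n. complex_of_real (1 / l2_norm x) * x n)"

lemma l2_norm_normalize: "x \<in> l2 \<Longrightarrow> l2_norm x \<noteq> 0 \<Longrightarrow> l2_norm (l2_normalize x) = 1"
  unfolding l2_normalize_def
  using l2_norm_scale[of x "complex_of_real (1 / l2_norm x)"] l2_norm_nonneg[of x]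
  by (simp add: norm_divide)

lemma l2_normalize_l2: "x \<in> l2 \<Longrightarrow> l2_normalize x \<in> l2"
  unfolding l2_normalize_def by (rule l2_scale)

definition l2_subspace :: "(nat \<Rightarrow> complex) set \<Rightarrow> bool" where
  "l2_subspace S \<longleftrightarrow> S \<subseteq> l2 \<and> (\<lambda>_. 0) \<in> S \<and> (\<forall>x\<in>S. \<forall>y\<in>S. \<forall>a b. (\<lambda>n. a * x n + b * y n) \<in> S)"

lemma l2_subspace_l2: "l2_subspace S \<Longrightarrow> x \<in> S \<Longrightarrow> x \<in> l2"
  unfolding l2_subspace_def by blast

lemma l2_subspace_zero: "l2_subspace S \<Longrightarrow> (\<lambda>_. 0) \<in> S"
  unfolding l2_subspace_def by blast

lemma l2_subspace_lincomb:
  "l2_subspace S \<Longrightarrow> x \<in> S \<Longrightarrow> y \<in> S \<Longrightarrow> (\<lambda>n. a * x n + b * y n) \<in> S"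
  unfolding l2_subspace_def by blast

lemma l2_subspace_scale: "l2_subspace S \<Longrightarrow> x \<in> S \<Longrightarrow> (\<lambda>n. a * x n) \<in> S"
  using l2_subspace_lincomb[of S x x a 0] by simp

lemma l2_subspace_normalize: "l2_subspace S \<Longrightarrow> x \<in> S \<Longrightarrow> l2_normalize x \<in> S"
  unfolding l2_normalize_def by (rule l2_subspace_scale)

lemma l2_inner_normalize:
  assumes x: "x \<in> l2"
  shows "l2_inner x (l2_normalize x) = complex_of_real (l2_norm x)"
proof -
  have "l2_inner x (l2_normalize x) = complex_of_real (1 / l2_norm x * (l2_norm x)\<^sup>2)"
    unfolding l2_normalize_def l2_inner_scale_right[OF x x] l2_inner_self[OF x] by simp
  then show ?thesis
    by (cases "l2_norm x = 0") (simp_all add: power2_eq_square)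
qed

lemma orthonormal_on_normalize:
  assumes W: "\<And>m. m \<in> J \<Longrightarrow> W m \<in> l2" "\<And>m. m \<in> J \<Longrightarrow> l2_norm (W m) \<noteq> 0"
    and orth: "\<And>m m'. m \<in> J \<Longrightarrow> m' \<in> J \<Longrightarrow> m \<noteq> m' \<Longrightarrow> l2_inner (W m) (W m') = 0"
  shows "orthonormal_on (\<lambda>m. l2_normalize (W m)) J"
  unfolding orthonormal_on_def
proof (intro conjI ballI)
  fix m m'
  assume m: "m \<in> J" and m': "m' \<in> J"
  show "l2_normalize (W m) \<in> l2"
    by (rule l2_normalize_l2[OF W(1)[OF m]])
  show "l2_inner (l2_normalize (W m)) (l2_normalize (W m')) = (if m = m' then 1 else 0)"
  proof (cases "m = m'")
    case True
    then show ?thesis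
      using l2_inner_self[OF l2_normalize_l2[OF W(1)[OF m]]] l2_norm_normalize[OF W[OF m]] by simp
  next
    case False
    then show ?thesis
      unfolding l2_normalize_def l2_inner_scale_left[OF W(1)[OF m] l2_scale[OF W(1)[OF m']]]
        l2_inner_scale_right[OF W(1)[OF m'] W(1)[OF m]] orth[OF m m' False]
      by simp
  qed
qed

definition l2_orth :: "(nat \<Rightarrow> nat \<Rightarrow> complex) \<Rightarrow> nat \<Rightarrow> (nat \<Rightarrow> complex) set" where
  "l2_orth E n = {x \<in> l2. \<forall>m<n. l2_inner x (E m) = 0}"

lemma l2_subspace_l2_orth:
  assumes "\<And>m. m < n \<Longrightarrow> E m \<in> l2"
  shows "l2_subspace (l2_orth E n)"
  unfolding l2_subspace_def l2_orth_def using assms by (auto simp: l2_lincomb l2_inner_lincomb_left)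

lemma orthonormal_on_exists_coord_square_sum_neq_one:
  assumes E: "orthonormal_on E {..<n}"
  shows "\<exists>c. (\<Sum>m<n. (cmod (E m c))\<^sup>2) \<noteq> 1"
proof (rule ccontr)
  assume "\<not> ?thesis"
  then have "real (Suc n) = (\<Sum>c<Suc n. \<Sum>m<n. (cmod (E m c))\<^sup>2)"
    by simp
  also have "\<dots> = (\<Sum>m<n. \<Sum>c<Suc n. (cmod (E m c))\<^sup>2)"
    by (rule sum.swap)
  also have "\<dots> \<le> (\<Sum>m<n. (l2_norm (E m))\<^sup>2)"
    using E by (intro sum_mono l2_partial_sum_le) (simp add: orthonormal_on_l2)
  also have "\<dots> = real n"
    using E by (simp add: orthonormal_on_norm)
  finally show False
    by simp
qed

lemma exists_unit_orthogonal:
  assumes E: "orthonormal_on E {..<n}"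
  shows "\<exists>u\<in>l2_orth E n. l2_norm u = 1"
proof -
  obtain c where "(\<Sum>m<n. (cmod (E m c))\<^sup>2) \<noteq> 1"
    using orthonormal_on_exists_coord_square_sum_neq_one[OF E] by blast
  moreover define S where "S = (\<Sum>m<n. (cmod (E m c))\<^sup>2)"
  ultimately have S: "S \<noteq> 1"
    by simp
  define proj where "proj = (\<lambda>i. \<Sum>m<n. cnj (E m c) * E m i)"
  define Q where "Q = (\<lambda>i. delta c i - proj i)"
  have proj: "proj \<in> l2"
    unfolding proj_def using E by (intro l2_sum l2_scale) (auto simp: orthonormal_on_l2)
  have Q: "Q \<in> l2"
    unfolding Q_def by (intro l2_diff delta_l2 proj)
  have "l2_inner Q (E k) = 0" if "k < n" for k
    using that l2_inner_orthonormal_sum[OF _ E, of k "\<lambda>m. cnj (E m c)"]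
      l2_inner_diff_left[OF delta_l2 proj orthonormal_on_l2[OF E]]
    unfolding Q_def proj_def by (simp add: l2_inner_delta_left orthonormal_on_l2[OF E])
  then have Q_orth: "Q \<in> l2_orth E n"
    using Q by (simp add: l2_orth_def)
  have "proj c = complex_of_real S"
    unfolding proj_def S_def of_real_sum by (simp only: complex_norm_square mult.commute)
  then have "Q c \<noteq> 0"
    using S by (simp add: Q_def delta_def)
  then have "l2_norm Q \<noteq> 0"
    using l2_norm_eq_zero[OF Q] by auto
  then show ?thesis
    using l2_subspace_normalize[OF l2_subspace_l2_orth Q_orth] l2_norm_normalize[OF Q] E
    by (meson lessThan_iff orthonormal_on_l2)
qed

section \<open>Weak limits and variational maxima\<close>

text \<open>On the unit ball of \<open>l2\<close>, coordinatewise convergence is weak convergence.\<close>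

definition weak_lim :: "(nat \<Rightarrow> nat \<Rightarrow> complex) \<Rightarrow> (nat \<Rightarrow> complex) \<Rightarrow> bool" where
  "weak_lim xs z \<longleftrightarrow> (\<forall>k. xs k \<in> l2 \<and> l2_norm (xs k) \<le> 1) \<and> (\<forall>j. (\<lambda>k. xs k j) \<longlonglongrightarrow> z j)"

lemma bounded_seq_has_pointwise_convergent_subseq:
  fixes xs :: "nat \<Rightarrow> nat \<Rightarrow> complex"
  assumes "\<And>k j. cmod (xs k j) \<le> 1"
  shows "\<exists>r z. strict_mono r \<and> (\<forall>j. (\<lambda>k. xs (r k) j) \<longlonglongrightarrow> z j)"
proof -
  let ?S = "PiE UNIV (\<lambda>_::nat. cball (0::complex) 1)"
  have "compactin (product_topology (\<lambda>_. euclidean) UNIV) ?S"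
    by (subst compactin_PiE) auto
  then have "seq_compact ?S"
    by (simp add: euclidean_product_topology compact_imp_seq_compact)
  moreover have "xs k \<in> ?S" for k
    using assms by (auto simp: PiE_def)
  ultimately obtain z r where "strict_mono r" "(xs \<circ> r) \<longlonglongrightarrow> z"
    unfolding seq_compact_def by meson
  moreover have "(\<lambda>k. xs (r k) j) \<longlonglongrightarrow> z j" if "(xs \<circ> r) \<longlonglongrightarrow> z" for j
  proof -
    have "isCont (\<lambda>f::nat \<Rightarrow> complex. f j) z"
      using continuous_on_eq_continuous_at[OF open_UNIV, of "\<lambda>f::nat \<Rightarrow> complex. f j"] by simp
    then show ?thesis
      using isCont_tendsto_compose[OF _ that] by (simp add: o_def)
  qed
  ultimately show ?thesis
    by blast
qed

lemma weak_lim_l2: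
  assumes w: "weak_lim xs z"
  shows "z \<in> l2" "l2_norm z \<le> 1"
proof -
  have "(\<Sum>j<N. (cmod (z j))\<^sup>2) \<le> 1\<^sup>2" for N
  proof (rule LIMSEQ_le_const2)
    show "(\<lambda>k. \<Sum>j<N. (cmod (xs k j))\<^sup>2) \<longlonglongrightarrow> (\<Sum>j<N. (cmod (z j))\<^sup>2)"
      using w unfolding weak_lim_def by (intro tendsto_sum tendsto_power tendsto_norm) auto
    have "(\<Sum>j<N. (cmod (xs k j))\<^sup>2) \<le> 1" for k
      using w l2_partial_sum_le[of "xs k" N] l2_norm_nonneg[of "xs k"] power_le_one[of "l2_norm (xs k)" 2]
      unfolding weak_lim_def by auto
    then show "\<exists>N0. \<forall>k\<ge>N0. (\<Sum>j<N. (cmod (xs k j))\<^sup>2) \<le> 1\<^sup>2"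
      by simp
  qed
  then show "z \<in> l2" "l2_norm z \<le> 1"
    using l2_of_bounded_partial_sums[of z 1] by simp_all
qed

lemma weak_lim_subseq:
  fixes xs :: "nat \<Rightarrow> nat \<Rightarrow> complex"
  assumes "\<And>k. xs k \<in> l2" "\<And>k. l2_norm (xs k) \<le> 1"
  shows "\<exists>r z. strict_mono r \<and> weak_lim (xs \<circ> r) z"
proof -
  have "cmod (xs k j) \<le> 1" for k j
    using l2_coord_le[OF assms(1), of k j] assms(2)[of k] by simp
  then obtain r z where "strict_mono r" "\<forall>j. (\<lambda>k. xs (r k) j) \<longlonglongrightarrow> z j"
    using bounded_seq_has_pointwise_convergent_subseq[of xs] by blast
  then show ?thesis
    unfolding weak_lim_def using assms by auto
qed

lemma weak_lim_inner:
  assumes w: "weak_lim xs z" and v: "v \<in> l2"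
  shows "(\<lambda>k. l2_inner (xs k) v) \<longlonglongrightarrow> l2_inner z v"
proof (rule LIMSEQ_I)
  fix e :: real
  assume "0 < e"
  have xs: "xs k \<in> l2" "l2_norm (xs k) \<le> 1" for k
    using w unfolding weak_lim_def by auto
  have z: "z \<in> l2" "l2_norm z \<le> 1"
    using weak_lim_l2[OF w] by auto
  obtain N where N: "l2_norm (\<lambda>j. v j - truncate N v j) < e / 3"
    using order_tendstoD(2)[OF l2_norm_tail_tendsto_zero[OF v], of "e / 3"] \<open>0 < e\<close>
    by (auto simp: eventually_sequentially)
  let ?t = "\<lambda>j. v j - truncate N v j"
  have t: "?t \<in> l2"
    by (rule l2_diff[OF v truncate_l2])
  have split: "l2_inner y v = l2_inner y (truncate N v) + l2_inner y ?t" if "y \<in> l2" for y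
    using l2_inner_lincomb_right[OF truncate_l2[of N v] t that, where a = 1 and b = 1] by simp
  have small: "cmod (l2_inner y ?t) < e / 3" if "y \<in> l2" "l2_norm y \<le> 1" for y
    using l2_inner_bound[OF that(1) t] mult_right_mono[OF that(2) l2_norm_nonneg[OF t]] N by simp
  have "(\<lambda>k. l2_inner (xs k) (truncate N v)) \<longlonglongrightarrow> l2_inner z (truncate N v)"
    unfolding l2_inner_truncate using w unfolding weak_lim_def
    by (intro tendsto_sum tendsto_mult tendsto_const) auto
  from LIMSEQ_D[OF this, of "e / 3"] obtain k0 where
    k0: "\<And>k. k0 \<le> k \<Longrightarrow> cmod (l2_inner (xs k) (truncate N v) - l2_inner z (truncate N v)) < e / 3"
    using \<open>0 < e\<close> by auto
  have "cmod (l2_inner (xs k) v - l2_inner z v) < e" if "k0 \<le> k" for k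
  proof -
    let ?d = "l2_inner (xs k) (truncate N v) - l2_inner z (truncate N v)"
    have eq: "l2_inner (xs k) v - l2_inner z v = ?d + l2_inner (xs k) ?t - l2_inner z ?t"
      unfolding split[OF xs(1)] split[OF z(1)] by simp
    have "cmod (l2_inner (xs k) v - l2_inner z v)
        \<le> cmod ?d + cmod (l2_inner (xs k) ?t) + cmod (l2_inner z ?t)"
      unfolding eq using norm_triangle_ineq4[of "?d + l2_inner (xs k) ?t" "l2_inner z ?t"]
        norm_triangle_ineq[of ?d "l2_inner (xs k) ?t"] by linarith
    then show ?thesis
      using k0[OF that] small[OF xs, of k] small[OF z] by linarith
  qed
  then show "\<exists>k0. \<forall>k\<ge>k0. cmod (l2_inner (xs k) v - l2_inner z v) < e"
    by blast
qed

definition weakly_closed_subspace :: "(nat \<Rightarrow> complex) set \<Rightarrow> bool" where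
  "weakly_closed_subspace S \<longleftrightarrow> l2_subspace S \<and> (\<forall>xs z. weak_lim xs z \<longrightarrow> (\<forall>k. xs k \<in> S) \<longrightarrow> z \<in> S)"

lemma weakly_closed_subspaceD:
  assumes "weakly_closed_subspace S"
  shows "l2_subspace S" and "weak_lim xs z \<Longrightarrow> (\<And>k. xs k \<in> S) \<Longrightarrow> z \<in> S"
  using assms unfolding weakly_closed_subspace_def by blast+

lemma weakly_closed_subspace_l2_orth:
  assumes E: "\<And>m. m < n \<Longrightarrow> E m \<in> l2"
  shows "weakly_closed_subspace (l2_orth E n)"
  unfolding weakly_closed_subspace_def
proof (intro conjI allI impI l2_subspace_l2_orth[OF E])
  fix xs z
  assume w: "weak_lim xs z" and "\<forall>k. xs k \<in> l2_orth E n"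
  then have "(\<lambda>k. 0) \<longlonglongrightarrow> l2_inner z (E m)" if "m < n" for m
    using weak_lim_inner[OF w E[OF that]] that by (simp add: l2_orth_def)
  then show "z \<in> l2_orth E n"
    using weak_lim_l2[OF w] by (auto simp: l2_orth_def LIMSEQ_const_iff)
qed

lemma exists_max_on_unit_ball:
  fixes \<Phi> :: "(nat \<Rightarrow> complex) \<Rightarrow> real"
  assumes S: "weakly_closed_subspace S"
    and cont: "\<And>xs z. weak_lim xs z \<Longrightarrow> (\<And>k. xs k \<in> S) \<Longrightarrow> (\<lambda>k. \<Phi> (xs k)) \<longlonglongrightarrow> \<Phi> z"
    and bdd: "\<And>x. x \<in> S \<Longrightarrow> l2_norm x \<le> 1 \<Longrightarrow> \<Phi> x \<le> C"
  shows "\<exists>x\<in>S. l2_norm x \<le> 1 \<and> (\<forall>y\<in>S. l2_norm y \<le> 1 \<longrightarrow> \<Phi> y \<le> \<Phi> x)"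
proof -
  define K where "K = {x\<in>S. l2_norm x \<le> 1}"
  define m where "m = Sup (\<Phi> ` K)"
  have "(\<lambda>_. 0) \<in> K"
    using l2_subspace_zero[OF weakly_closed_subspaceD(1)[OF S]] by (simp add: K_def)
  moreover have bdd_above: "bdd_above (\<Phi> ` K)"
    using bdd unfolding K_def by (intro bdd_aboveI) blast
  ultimately have "\<exists>y\<in>K. m - inverse (real (Suc k)) < \<Phi> y" for k
    using less_cSup_iff[of "\<Phi> ` K" "m - inverse (real (Suc k))"] by (auto simp: m_def)
  then obtain ys where ys: "\<And>k. ys k \<in> K" "\<And>k. m - inverse (real (Suc k)) < \<Phi> (ys k)"
    by metis
  then obtain r z where r: "strict_mono r" and w: "weak_lim (ys \<circ> r) z"
    using weak_lim_subseq[of ys] weakly_closed_subspaceD(1)[OF S] by (auto simp: K_def l2_subspace_l2)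
  have in_S: "(ys \<circ> r) k \<in> S" for k
    using ys(1) by (simp add: K_def)
  have "(\<lambda>k. m - inverse (real (Suc (r k)))) \<longlonglongrightarrow> m"
    using LIMSEQ_subseq_LIMSEQ[OF tendsto_diff[OF tendsto_const LIMSEQ_inverse_real_of_nat] r]
    by (simp add: o_def)
  then have "m \<le> \<Phi> z"
    using LIMSEQ_le[OF _ cont[OF w in_S]] ys(2) by (simp add: less_imp_le)
  moreover have "\<Phi> y \<le> m" if "y \<in> S" "l2_norm y \<le> 1" for y
    unfolding m_def using that by (intro cSup_upper bdd_above) (auto simp: K_def)
  ultimately show ?thesis
    using weakly_closed_subspaceD(2)[OF S w in_S] weak_lim_l2(2)[OF w] by force
qed

lemma le_square_norm_if_unit_ball_bound:
  fixes \<Phi> :: "(nat \<Rightarrow> complex) \<Rightarrow> real"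
  assumes S: "l2_subspace S"
    and homog: "\<And>x c. x \<in> S \<Longrightarrow> \<Phi> (\<lambda>n. complex_of_real c * x n) = c\<^sup>2 * \<Phi> x"
    and bound: "\<And>x. x \<in> S \<Longrightarrow> l2_norm x \<le> 1 \<Longrightarrow> \<Phi> x \<le> K"
    and y: "y \<in> S"
  shows "\<Phi> y \<le> K * (l2_norm y)\<^sup>2"
proof (cases "l2_norm y = 0")
  case True
  then show ?thesis
    using homog[OF y, of 0] l2_norm_eq_zero[OF l2_subspace_l2[OF S y]] by simp
next
  case False
  have "(1 / l2_norm y)\<^sup>2 * \<Phi> y \<le> K"
    using bound[OF l2_subspace_normalize[OF S y] l2_norm_normalize[OF l2_subspace_l2[OF S y] False, THEN eq_refl]]
    unfolding l2_normalize_def homog[OF y] .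
  then show ?thesis
    using pos_divide_le_eq[of "(l2_norm y)\<^sup>2" "\<Phi> y" K] False by (simp add: power_divide mult.commute)
qed

lemma exists_unit_maximizer:
  fixes \<Phi> :: "(nat \<Rightarrow> complex) \<Rightarrow> real"
  assumes S: "weakly_closed_subspace S"
    and cont: "\<And>xs z. weak_lim xs z \<Longrightarrow> (\<And>k. xs k \<in> S) \<Longrightarrow> (\<lambda>k. \<Phi> (xs k)) \<longlonglongrightarrow> \<Phi> z"
    and bdd: "\<And>x. x \<in> S \<Longrightarrow> l2_norm x \<le> 1 \<Longrightarrow> \<Phi> x \<le> C"
    and nonneg: "\<And>x. x \<in> S \<Longrightarrow> 0 \<le> \<Phi> x"
    and homog: "\<And>x c. x \<in> S \<Longrightarrow> \<Phi> (\<lambda>n. complex_of_real c * x n) = c\<^sup>2 * \<Phi> x"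
    and unit: "u \<in> S" "l2_norm u = 1"
  shows "\<exists>x\<in>S. l2_norm x = 1 \<and> (\<forall>y\<in>S. \<Phi> y \<le> \<Phi> x * (l2_norm y)\<^sup>2)"
proof -
  note sub = weakly_closed_subspaceD(1)[OF S]
  from exists_max_on_unit_ball[of S \<Phi> C, OF S cont bdd] obtain x0 where x0: "x0 \<in> S" "l2_norm x0 \<le> 1"
    and max: "\<forall>y\<in>S. l2_norm y \<le> 1 \<longrightarrow> \<Phi> y \<le> \<Phi> x0"
    by blast
  have bound: "\<Phi> y \<le> \<Phi> x0 * (l2_norm y)\<^sup>2" if "y \<in> S" for y
    using le_square_norm_if_unit_ball_bound[of S \<Phi> "\<Phi> x0", OF sub homog _ that] max by blast
  show ?thesis
  proof (cases "\<Phi> x0 = 0")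
    case True
    then show ?thesis
      using unit bound nonneg by (metis antisym mult_zero_left)
  next
    case False
    then have x0_norm: "l2_norm x0 \<noteq> 0"
      using bound[OF x0(1)] nonneg[OF x0(1)] by fastforce
    let ?x = "l2_normalize x0"
    have "(l2_norm x0)\<^sup>2 \<le> 1"
      using x0(2) l2_norm_nonneg[OF l2_subspace_l2[OF sub x0(1)]] by (simp add: power_le_one)
    then have "\<Phi> x0 \<le> \<Phi> ?x"
      unfolding l2_normalize_def homog[OF x0(1)] using x0_norm nonneg[OF x0(1)]
      by (simp add: power_divide field_simps mult_left_le)
    then have "\<Phi> y \<le> \<Phi> ?x * (l2_norm y)\<^sup>2" if "y \<in> S" for y
      using order_trans[OF bound[OF that] mult_right_mono[OF _ zero_le_power2]] by blast
    then show ?thesis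
      using l2_subspace_normalize[OF sub x0(1)] l2_norm_normalize[OF l2_subspace_l2[OF sub x0(1)] x0_norm]
      by blast
  qed
qed

lemma quadratic_nonpos_imp_linear_zero:
  fixes a b :: real
  assumes "\<And>t. 2 * t * a + t\<^sup>2 * b \<le> 0"
  shows "a = 0"
proof (rule ccontr)
  assume "a \<noteq> 0"
  define t where "t = a / (\<bar>b\<bar> + 1)"
  have "0 < t * a"
    using \<open>a \<noteq> 0\<close> by (simp add: t_def power2_eq_square[symmetric] add_pos_nonneg)
  moreover have "t\<^sup>2 * \<bar>b\<bar> \<le> t * a"
  proof -
    have "t\<^sup>2 * \<bar>b\<bar> = t * a * (\<bar>b\<bar> / (\<bar>b\<bar> + 1))"
      by (simp add: t_def power2_eq_square field_simps)
    also have "\<dots> \<le> t * a"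
      using \<open>0 < t * a\<close> by (intro mult_left_le) simp_all
    finally show ?thesis .
  qed
  moreover have "- (t\<^sup>2 * \<bar>b\<bar>) \<le> t\<^sup>2 * b"
    using mult_left_mono[of "- \<bar>b\<bar>" b "t\<^sup>2"] by simp
  ultimately show False
    using assms[of t] by linarith
qed

text \<open>At a maximiser \<open>x\<close> of the Rayleigh quotient \<open>\<parallel>T z\<parallel>\<^sup>2 / \<parallel>z\<parallel>\<^sup>2\<close> its derivative in every
  direction \<open>y\<close> vanishes; this is the real part of that first-order condition.\<close>

lemma maximizer_inner_re:
  assumes S: "l2_subspace S"
    and T_l2: "\<And>y. y \<in> S \<Longrightarrow> T y \<in> l2"
    and T_lin: "\<And>x y a b. x \<in> S \<Longrightarrow> y \<in> S \<Longrightarrow>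
      T (\<lambda>n. a * x n + b * y n) = (\<lambda>n. a * T x n + b * T y n)"
    and x: "x \<in> S" "l2_norm x = 1"
    and max: "\<And>y. y \<in> S \<Longrightarrow> (l2_norm (T y))\<^sup>2 \<le> (l2_norm (T x))\<^sup>2 * (l2_norm y)\<^sup>2"
    and y: "y \<in> S"
  shows "Re (l2_inner (T x) (T y)) = (l2_norm (T x))\<^sup>2 * Re (l2_inner x y)"
proof -
  define m where "m = (l2_norm (T x))\<^sup>2"
  have "Re (l2_inner (T x) (T y)) - m * Re (l2_inner x y) = 0"
  proof (rule quadratic_nonpos_imp_linear_zero)
    fix t :: real
    let ?z = "\<lambda>i. x i + complex_of_real t * y i"
    have "?z \<in> S"
      using l2_subspace_lincomb[OF S x(1) y, of 1] by simp
    moreover have "T ?z = (\<lambda>i. T x i + complex_of_real t * T y i)"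
      using T_lin[OF x(1) y, of 1] by simp
    ultimately have "(l2_norm (\<lambda>i. T x i + complex_of_real t * T y i))\<^sup>2 \<le> m * (l2_norm ?z)\<^sup>2"
      using max unfolding m_def by metis
    then show "2 * t * (Re (l2_inner (T x) (T y)) - m * Re (l2_inner x y))
        + t\<^sup>2 * ((l2_norm (T y))\<^sup>2 - m * (l2_norm y)\<^sup>2) \<le> 0"
      using l2_norm_add_scaled_square[OF T_l2[OF x(1)] T_l2[OF y], of t]
        l2_norm_add_scaled_square[OF l2_subspace_l2[OF S x(1)] l2_subspace_l2[OF S y], of t] x(2)
      unfolding m_def by (simp add: algebra_simps)
  qed
  then show ?thesis
    by (simp add: m_def)
qed

lemma maximizer_inner_eq:
  assumes S: "l2_subspace S"
    and T_l2: "\<And>y. y \<in> S \<Longrightarrow> T y \<in> l2"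
    and T_lin: "\<And>x y a b. x \<in> S \<Longrightarrow> y \<in> S \<Longrightarrow>
      T (\<lambda>n. a * x n + b * y n) = (\<lambda>n. a * T x n + b * T y n)"
    and x: "x \<in> S" "l2_norm x = 1"
    and max: "\<And>y. y \<in> S \<Longrightarrow> (l2_norm (T y))\<^sup>2 \<le> (l2_norm (T x))\<^sup>2 * (l2_norm y)\<^sup>2"
    and y: "y \<in> S"
  shows "l2_inner (T x) (T y) = complex_of_real ((l2_norm (T x))\<^sup>2) * l2_inner x y"
proof -
  have re: "Re (l2_inner (T x) (T z)) = (l2_norm (T x))\<^sup>2 * Re (l2_inner x z)" if "z \<in> S" for z
    by (rule maximizer_inner_re[where T = T, OF S T_l2 T_lin x max that])
  let ?iy = "\<lambda>n. \<i> * y n"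
  have "T ?iy = (\<lambda>n. \<i> * T y n)"
    using T_lin[OF y y, of \<i> 0] by simp
  then have "Im (l2_inner (T x) (T y)) = (l2_norm (T x))\<^sup>2 * Im (l2_inner x y)"
    using re[OF l2_subspace_scale[OF S y, of \<i>]]
      l2_inner_scale_right[OF T_l2[OF y] T_l2[OF x(1)], of \<i>]
      l2_inner_scale_right[OF l2_subspace_l2[OF S y] l2_subspace_l2[OF S x(1)], of \<i>]
    by simp
  then show ?thesis
    using re[OF y] by (simp add: complex_eq_iff)
qed

lemma exists_coordinate_maximizer:
  assumes S: "weakly_closed_subspace S" and u: "u \<in> S" "l2_norm u = 1"
  shows "\<exists>x\<in>S. l2_norm x = 1 \<and> (\<forall>y\<in>S. (cmod (y c))\<^sup>2 \<le> (cmod (x c))\<^sup>2 * (l2_norm y)\<^sup>2)"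
proof (rule exists_unit_maximizer[of S "\<lambda>y. (cmod (y c))\<^sup>2" 1, OF S _ _ _ _ u])
  show "(\<lambda>k. (cmod (xs k c))\<^sup>2) \<longlonglongrightarrow> (cmod (z c))\<^sup>2" if "weak_lim xs z" for xs z
    using that unfolding weak_lim_def by (intro tendsto_power tendsto_norm) blast
  show "(cmod (x c))\<^sup>2 \<le> 1" if "x \<in> S" "l2_norm x \<le> 1" for x
    using l2_coord_le[OF l2_subspace_l2[OF weakly_closed_subspaceD(1)[OF S] that(1)], of c] that(2)
    by (simp add: power_le_one)
  show "(cmod (complex_of_real r * x c))\<^sup>2 = r\<^sup>2 * (cmod (x c))\<^sup>2" for x r
    by (simp add: norm_mult power_mult_distrib)
qed simp

lemma exists_coordinate_absorbing_vector:
  assumes S: "weakly_closed_subspace S" and y0: "y0 \<in> S" "y0 c \<noteq> 0"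
  shows "\<exists>x\<in>S. l2_norm x = 1 \<and> (\<forall>y\<in>S. l2_inner y x = 0 \<longrightarrow> y c = 0)"
proof -
  note sub = weakly_closed_subspaceD(1)[OF S]
  have "l2_norm y0 \<noteq> 0"
    using l2_norm_eq_zero[OF l2_subspace_l2[OF sub y0(1)]] y0(2) by auto
  then obtain x where x: "x \<in> S" "l2_norm x = 1"
    and max: "\<forall>y\<in>S. (cmod (y c))\<^sup>2 \<le> (cmod (x c))\<^sup>2 * (l2_norm y)\<^sup>2"
    using exists_coordinate_maximizer[OF S l2_subspace_normalize[OF sub y0(1)]]
      l2_norm_normalize[OF l2_subspace_l2[OF sub y0(1)]] by blast
  \<comment> \<open>the coordinate functional \<open>y \<mapsto> y c\<close> as a map into \<open>l2\<close>, so that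
    \<open>maximizer_inner_eq\<close> applies\<close>
  define T where "T y = (\<lambda>i. y c * delta 0 i)" for y :: "nat \<Rightarrow> complex"
  have T_l2: "T y \<in> l2" for y
    unfolding T_def by (rule l2_scale[OF delta_l2])
  have T_norm: "l2_norm (T y) = cmod (y c)" for y
    unfolding T_def by (simp add: l2_norm_scale[OF delta_l2] l2_norm_delta)
  have T_inner: "l2_inner (T x) (T y) = x c * cnj (y c)" for x y
  proof -
    have "l2_inner (delta 0) (delta 0) = 1"
      using l2_inner_delta_right[of "delta 0" 0] by (simp add: delta_def)
    then show ?thesis
      unfolding T_def by (simp add: l2_inner_scale_left l2_inner_scale_right l2_scale delta_l2)
  qed
  have T_lin: "T (\<lambda>n. a * x n + b * y n) = (\<lambda>n. a * T x n + b * T y n)" for x y a b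
    unfolding T_def by (simp add: fun_eq_iff algebra_simps)
  have "x c \<noteq> 0"
    using max y0 by auto
  moreover have "x c * cnj (y c) = 0" if "y \<in> S" "l2_inner y x = 0" for y
    using maximizer_inner_eq[where T = T, OF sub T_l2 T_lin x _ that(1)] max T_norm T_inner
      l2_inner_cnj[OF l2_subspace_l2[OF sub that(1)] l2_subspace_l2[OF sub x(1)]] that(2)
    by simp
  ultimately show ?thesis
    using x by auto
qed

section \<open>Diagonal operators\<close>

definition diag_op :: "(nat \<Rightarrow> nat \<Rightarrow> complex) \<Rightarrow> (nat \<Rightarrow> real) \<Rightarrow> (nat \<Rightarrow> complex) \<Rightarrow> nat \<Rightarrow> complex"
  where "diag_op e c x = (\<lambda>i. \<Sum>n. complex_of_real (c n) * l2_inner x (e n) * e n i)"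

locale orthonormal_seq =
  fixes e :: "nat \<Rightarrow> nat \<Rightarrow> complex"
  assumes l2: "\<And>n. e n \<in> l2"
    and orthonormal: "\<And>m n. l2_inner (e m) (e n) = (if m = n then 1 else 0)"
begin

lemma norm_eq_one: "l2_norm (e n) = 1"
  using l2 orthonormal by (simp add: l2_norm_eq_one)

lemma coord_le_one: "cmod (e n i) \<le> 1"
  using l2_coord_le[OF l2, of n i] norm_eq_one by simp

lemma inner_le_norm: "x \<in> l2 \<Longrightarrow> cmod (l2_inner x (e n)) \<le> l2_norm x"
  using l2_inner_bound[OF _ l2, of x n] norm_eq_one by simp

lemma inner_le_norm': "y \<in> l2 \<Longrightarrow> cmod (l2_inner (e n) y) \<le> l2_norm y"
  using l2_inner_bound[OF l2 _, of y n] norm_eq_one by simp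

context
  fixes c :: "nat \<Rightarrow> real"
  assumes summable_c: "summable (\<lambda>n. \<bar>c n\<bar>)"
begin

lemma diag_op_summable:
  assumes x: "x \<in> l2"
  shows "summable (\<lambda>n. norm (complex_of_real (c n) * l2_inner x (e n) * e n i))"
proof (rule summable_comparison_test'[where g = "\<lambda>n. l2_norm x * \<bar>c n\<bar>"])
  show "summable (\<lambda>n. l2_norm x * \<bar>c n\<bar>)"
    using summable_c by (rule summable_mult)
  show "norm (norm (complex_of_real (c n) * l2_inner x (e n) * e n i)) \<le> l2_norm x * \<bar>c n\<bar>" for n
  proof -
    have "cmod (l2_inner x (e n)) * cmod (e n i) \<le> l2_norm x * 1"
      using inner_le_norm[OF x, of n] coord_le_one[of n i] l2_norm_nonneg[OF x]
      by (intro mult_mono) simp_all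
    from mult_left_mono[OF this abs_ge_zero[of "c n"]] show ?thesis
      by (simp add: norm_mult mult_ac)
  qed
qed

lemma diag_op_inner_abs_summable:
  assumes x: "x \<in> l2" and y: "y \<in> l2"
  defines "h \<equiv> \<lambda>n i. complex_of_real (c n) * l2_inner x (e n) * e n i * cnj (y i)"
  shows "summable (\<lambda>i. norm (h n i))" and "summable (\<lambda>n. \<Sum>i. norm (h n i))"
proof -
  have h_norm: "norm (h n i) = (\<bar>c n\<bar> * cmod (l2_inner x (e n))) * (cmod (e n i) * cmod (y i))" for n i
    by (simp add: h_def norm_mult)
  show rows: "summable (\<lambda>i. norm (h n i))" for n
    unfolding h_norm by (rule summable_mult[OF l2_cauchy_schwarz(1)[OF l2 y]])
  have row_le: "(\<Sum>i. norm (h n i)) \<le> \<bar>c n\<bar> * (l2_norm x * l2_norm y)" for n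
  proof -
    have "(\<Sum>i. norm (h n i)) = (\<bar>c n\<bar> * cmod (l2_inner x (e n))) * (\<Sum>i. cmod (e n i) * cmod (y i))"
      unfolding h_norm by (rule suminf_mult[OF l2_cauchy_schwarz(1)[OF l2 y]])
    also have "\<dots> \<le> (\<bar>c n\<bar> * l2_norm x) * (1 * l2_norm y)"
      using inner_le_norm[OF x, of n] l2_cauchy_schwarz[OF l2 y, of n] norm_eq_one[of n]
      by (intro mult_mono mult_left_mono) (simp_all add: l2_norm_nonneg x suminf_nonneg)
    finally show ?thesis
      by (simp add: mult_ac)
  qed
  show "summable (\<lambda>n. \<Sum>i. norm (h n i))"
  proof (rule summable_comparison_test'[where g = "\<lambda>n. \<bar>c n\<bar> * (l2_norm x * l2_norm y)"])
    show "summable (\<lambda>n. \<bar>c n\<bar> * (l2_norm x * l2_norm y))"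
      using summable_c by (rule summable_mult2)
    show "norm (\<Sum>i. norm (h n i)) \<le> \<bar>c n\<bar> * (l2_norm x * l2_norm y)" for n
      using row_le[of n] suminf_nonneg[OF rows[of n]] by simp
  qed
qed

lemma diag_op_inner:
  assumes x: "x \<in> l2" and y: "y \<in> l2"
  shows "l2_inner (diag_op e c x) y = (\<Sum>n. complex_of_real (c n) * l2_inner x (e n) * l2_inner (e n) y)"
    and "summable (\<lambda>n. norm (complex_of_real (c n) * l2_inner x (e n) * l2_inner (e n) y))"
proof -
  define h where "h n i = complex_of_real (c n) * l2_inner x (e n) * e n i * cnj (y i)" for n i
  note rows = diag_op_inner_abs_summable(1)[OF x y, folded h_def]
    and total = diag_op_inner_abs_summable(2)[OF x y, folded h_def]
  have row_sum: "(\<Sum>i. h n i) = complex_of_real (c n) * l2_inner x (e n) * l2_inner (e n) y" for n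
    unfolding h_def l2_inner_def[of "e n" y]
    using suminf_mult[OF l2_inner_summable(2)[OF l2 y], of "complex_of_real (c n) * l2_inner x (e n)" n]
    by (simp add: mult_ac)
  have "l2_inner (diag_op e c x) y = (\<Sum>i. diag_op e c x i * cnj (y i))"
    unfolding l2_inner_def[of "diag_op e c x" y] ..
  also have "\<dots> = (\<Sum>i. \<Sum>n. h n i)"
    unfolding diag_op_def h_def
    by (rule suminf_cong) (rule suminf_mult2[OF summable_norm_cancel[OF diag_op_summable[OF x]]])
  also have "\<dots> = (\<Sum>n. \<Sum>i. h n i)"
    by (rule abs_summable_double_suminf_swap[OF rows total, symmetric])
  finally show "l2_inner (diag_op e c x) y
      = (\<Sum>n. complex_of_real (c n) * l2_inner x (e n) * l2_inner (e n) y)"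
    unfolding row_sum .
  show "summable (\<lambda>n. norm (complex_of_real (c n) * l2_inner x (e n) * l2_inner (e n) y))"
    by (rule summable_comparison_test'[OF total]) (simp add: row_sum[symmetric] summable_norm rows)
qed

lemma diag_op_inner_bound:
  assumes x: "x \<in> l2" and y: "y \<in> l2"
  shows "cmod (l2_inner (diag_op e c x) y) \<le> (\<Sum>n. \<bar>c n\<bar>) * l2_norm x * l2_norm y"
proof -
  have "cmod (l2_inner (diag_op e c x) y)
      \<le> (\<Sum>n. norm (complex_of_real (c n) * l2_inner x (e n) * l2_inner (e n) y))"
    unfolding diag_op_inner(1)[OF x y] by (rule summable_norm[OF diag_op_inner(2)[OF x y]])
  also have "\<dots> \<le> (\<Sum>n. \<bar>c n\<bar> * (l2_norm x * l2_norm y))"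
  proof (rule suminf_le[OF _ diag_op_inner(2)[OF x y]])
    show "summable (\<lambda>n. \<bar>c n\<bar> * (l2_norm x * l2_norm y))"
      using summable_c by (rule summable_mult2)
    show "norm (complex_of_real (c n) * l2_inner x (e n) * l2_inner (e n) y)
        \<le> \<bar>c n\<bar> * (l2_norm x * l2_norm y)" for n
      using mult_mono[OF inner_le_norm[OF x] inner_le_norm'[OF y]] l2_norm_nonneg[OF x]
      by (simp add: norm_mult mult.assoc mult_left_mono)
  qed
  also have "\<dots> = (\<Sum>n. \<bar>c n\<bar>) * l2_norm x * l2_norm y"
    using suminf_mult2[OF summable_c, of "l2_norm x * l2_norm y"] by (simp add: mult.assoc)
  finally show ?thesis .
qed

lemma diag_op_l2:
  assumes x: "x \<in> l2"
  shows "diag_op e c x \<in> l2" and "l2_norm (diag_op e c x) \<le> (\<Sum>n. \<bar>c n\<bar>) * l2_norm x"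
proof -
  let ?d = "diag_op e c x"
  define K where "K = (\<Sum>n. \<bar>c n\<bar>) * l2_norm x"
  have K: "0 \<le> K"
    unfolding K_def using summable_c l2_norm_nonneg[OF x] by (simp add: suminf_nonneg)
  have "(\<Sum>i<N. (cmod (?d i))\<^sup>2) \<le> K\<^sup>2" for N
  proof (rule le_square_of_le_mult_sqrt)
    let ?S = "\<Sum>i<N. (cmod (?d i))\<^sup>2"
    have inner: "l2_inner ?d (truncate N ?d) = complex_of_real ?S"
      unfolding l2_inner_truncate of_real_sum by (simp only: complex_norm_square)
    have norm: "l2_norm (truncate N ?d) = sqrt ?S"
      using l2_norm_truncate[of N ?d] l2_norm_nonneg[OF truncate_l2] by (metis real_sqrt_unique)
    have "cmod (l2_inner ?d (truncate N ?d)) \<le> K * l2_norm (truncate N ?d)"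
      using diag_op_inner_bound[OF x truncate_l2, of N ?d] by (simp add: K_def)
    moreover have "0 \<le> ?S"
      by (simp add: sum_nonneg)
    ultimately show "?S \<le> K * sqrt ?S"
      unfolding inner norm norm_of_real by (metis abs_of_nonneg)
  qed (simp add: sum_nonneg)
  then show "?d \<in> l2" "l2_norm ?d \<le> (\<Sum>n. \<bar>c n\<bar>) * l2_norm x"
    using l2_of_bounded_partial_sums[OF _ K] by (simp_all add: K_def)
qed

lemma diag_op_lincomb:
  assumes x: "x \<in> l2" and y: "y \<in> l2"
  shows "diag_op e c (\<lambda>n. a * x n + b * y n) = (\<lambda>n. a * diag_op e c x n + b * diag_op e c y n)"
proof
  fix i
  have "diag_op e c (\<lambda>n. a * x n + b * y n) i
      = (\<Sum>k. a * (complex_of_real (c k) * l2_inner x (e k) * e k i)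
          + b * (complex_of_real (c k) * l2_inner y (e k) * e k i))"
    unfolding diag_op_def l2_inner_lincomb_left[OF x y l2] by (simp add: algebra_simps)
  also have "\<dots> = a * diag_op e c x i + b * diag_op e c y i"
    unfolding diag_op_def
    using summable_norm_cancel[OF diag_op_summable[OF x]] summable_norm_cancel[OF diag_op_summable[OF y]]
    by (simp add: suminf_add[symmetric] summable_mult suminf_mult)
  finally show "diag_op e c (\<lambda>n. a * x n + b * y n) i = a * diag_op e c x i + b * diag_op e c y i" .
qed

lemma diag_op_bounded: "l2_bounded_op (diag_op e c)"
  unfolding l2_bounded_op_def using diag_op_l2 diag_op_lincomb by blast

lemma diag_op_eigenvector: "diag_op e c (e m) = (\<lambda>i. complex_of_real (c m) * e m i)"
proof
  fix i
  have "diag_op e c (e m) i = (\<Sum>n. if n = m then complex_of_real (c m) * e m i else 0)"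
    unfolding diag_op_def by (rule suminf_cong) (simp add: orthonormal)
  then show "diag_op e c (e m) i = complex_of_real (c m) * e m i"
    by (simp only: suminf_delta)
qed

lemma diag_op_inner_basis:
  assumes x: "x \<in> l2"
  shows "l2_inner (diag_op e c x) (e m) = complex_of_real (c m) * l2_inner x (e m)"
proof -
  have "l2_inner (diag_op e c x) (e m)
      = (\<Sum>n. if n = m then complex_of_real (c m) * l2_inner x (e m) else 0)"
    unfolding diag_op_inner(1)[OF x l2] by (rule suminf_cong) (simp add: orthonormal)
  then show ?thesis
    by (simp only: suminf_delta)
qed

lemma diag_op_selfadjoint:
  assumes x: "x \<in> l2" and y: "y \<in> l2"
  shows "l2_inner (diag_op e c x) y = l2_inner x (diag_op e c y)"
proof -
  have "l2_inner x (diag_op e c y) = cnj (\<Sum>n. complex_of_real (c n) * l2_inner y (e n) * l2_inner (e n) x)"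
    using l2_inner_cnj[OF diag_op_l2(1)[OF y] x] diag_op_inner(1)[OF y x] by simp
  also have "\<dots> = (\<Sum>n. complex_of_real (c n) * l2_inner x (e n) * l2_inner (e n) y)"
    using suminf_cnj[OF summable_norm_cancel[OF diag_op_inner(2)[OF y x]]]
      l2_inner_cnj[OF l2 x] l2_inner_cnj[OF y l2]
    by (simp add: mult_ac)
  also have "\<dots> = l2_inner (diag_op e c x) y"
    using diag_op_inner(1)[OF x y] by simp
  finally show ?thesis
    by simp
qed

lemma diag_op_inner_self:
  assumes x: "x \<in> l2"
  shows "summable (\<lambda>n. c n * (cmod (l2_inner x (e n)))\<^sup>2)"
    and "l2_inner (diag_op e c x) x = complex_of_real (\<Sum>n. c n * (cmod (l2_inner x (e n)))\<^sup>2)"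
proof -
  have summand: "complex_of_real (c n) * l2_inner x (e n) * l2_inner (e n) x
      = complex_of_real (c n * (cmod (l2_inner x (e n)))\<^sup>2)" for n
  proof -
    have "l2_inner x (e n) * l2_inner (e n) x = complex_of_real ((cmod (l2_inner x (e n)))\<^sup>2)"
      using l2_inner_cnj[OF x l2, of n] complex_norm_square by metis
    then show ?thesis
      by (simp add: mult.assoc)
  qed
  show summable: "summable (\<lambda>n. c n * (cmod (l2_inner x (e n)))\<^sup>2)"
    using summable_norm_cancel[OF diag_op_inner(2)[OF x x]] unfolding summand summable_complex_of_real .
  show "l2_inner (diag_op e c x) x = complex_of_real (\<Sum>n. c n * (cmod (l2_inner x (e n)))\<^sup>2)"
    using diag_op_inner(1)[OF x x] unfolding summand suminf_of_real[OF summable, symmetric] .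
qed

lemma diag_op_positive:
  assumes "\<And>n. 0 \<le> c n"
  shows "l2_positive (diag_op e c)"
  unfolding l2_positive_def
  using diag_op_bounded diag_op_selfadjoint diag_op_inner_self assms by (simp add: suminf_nonneg)

end

lemma diag_op_compose:
  assumes "summable (\<lambda>n. \<bar>d n\<bar>)" "x \<in> l2"
  shows "diag_op e c (diag_op e d x) = diag_op e (\<lambda>n. c n * d n) x"
  unfolding diag_op_def[of e c] diag_op_inner_basis[OF assms] by (simp add: diag_op_def mult_ac)

lemma eq_diag_op_if_inner_basis:
  assumes complete: "\<And>z. z \<in> l2 \<Longrightarrow> (\<And>n. l2_inner z (e n) = 0) \<Longrightarrow> z = (\<lambda>_. 0)"
    and c: "summable (\<lambda>n. \<bar>c n\<bar>)" and x: "x \<in> l2" and y: "y \<in> l2"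
    and coef: "\<And>n. l2_inner y (e n) = complex_of_real (c n) * l2_inner x (e n)"
  shows "y = diag_op e c x"
proof -
  have "(\<lambda>i. y i - diag_op e c x i) = (\<lambda>_. 0)"
  proof (rule complete)
    show "(\<lambda>i. y i - diag_op e c x i) \<in> l2"
      by (rule l2_diff[OF y diag_op_l2(1)[OF c x]])
    show "l2_inner (\<lambda>i. y i - diag_op e c x i) (e n) = 0" for n
      using coef[of n] diag_op_inner_basis[OF c x, of n]
      by (simp add: l2_inner_diff_left[OF y diag_op_l2(1)[OF c x] l2])
  qed
  then show ?thesis
    by (simp add: fun_eq_iff)
qed

end

section \<open>Absolutely summable matrices\<close>

definition adjoint_matrix :: "(nat \<Rightarrow> nat \<Rightarrow> complex) \<Rightarrow> nat \<Rightarrow> nat \<Rightarrow> complex" where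
  "adjoint_matrix M i j = cnj (M j i)"

lemma adjoint_matrix_adjoint_matrix [simp]: "adjoint_matrix (adjoint_matrix M) = M"
  by (simp add: adjoint_matrix_def fun_eq_iff)

locale abs_summable_matrix =
  fixes M :: "nat \<Rightarrow> nat \<Rightarrow> complex"
  assumes summable_rows: "\<And>i. summable (\<lambda>j. norm (M i j))"
    and summable_row_sums: "summable (\<lambda>i. \<Sum>j. norm (M i j))"
begin

definition abs_sum :: real where
  "abs_sum = (\<Sum>i. \<Sum>j. norm (M i j))"

abbreviation A where "A \<equiv> matrix_op M"

abbreviation A_adj where "A_adj \<equiv> matrix_op (adjoint_matrix M)"

lemma row_sum_le_abs_sum: "(\<Sum>j. norm (M i j)) \<le> abs_sum"
  unfolding abs_sum_def using summable_row_sums summable_rows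
  by (intro suminf_ge_term) (simp_all add: suminf_nonneg)

lemma abs_sum_nonneg: "0 \<le> abs_sum"
  using row_sum_le_abs_sum[of 0] summable_rows[of 0] suminf_nonneg[of "\<lambda>j. norm (M 0 j)"] by simp

lemma weighted_abs_summable:
  assumes w0: "\<And>i j. 0 \<le> w i j" and w1: "\<And>i j. w i j \<le> C"
  shows "summable (\<lambda>j. norm (M i j) * w i j)"
    and "summable (\<lambda>i. \<Sum>j. norm (M i j) * w i j)"
    and "(\<Sum>i. \<Sum>j. norm (M i j) * w i j) \<le> C * abs_sum"
proof -
  have le: "norm (M i j) * w i j \<le> C * norm (M i j)" for i j
    using mult_left_mono[OF w1[of i j] norm_ge_zero[of "M i j"]] by (simp add: mult.commute)
  show rows: "summable (\<lambda>j. norm (M i j) * w i j)" for i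
    by (rule summable_comparison_test'[OF summable_mult[OF summable_rows[of i], of C]])
      (use le w0 in simp)
  have row_le: "(\<Sum>j. norm (M i j) * w i j) \<le> C * (\<Sum>j. norm (M i j))" for i
    using suminf_le[OF le rows summable_mult[OF summable_rows]] suminf_mult[OF summable_rows] by simp
  have row_nonneg: "0 \<le> (\<Sum>j. norm (M i j) * w i j)" for i
    using rows w0 by (simp add: suminf_nonneg)
  show total: "summable (\<lambda>i. \<Sum>j. norm (M i j) * w i j)"
    by (rule summable_comparison_test'[OF summable_mult[OF summable_row_sums, of C]])
      (use row_le row_nonneg in simp)
  show "(\<Sum>i. \<Sum>j. norm (M i j) * w i j) \<le> C * abs_sum"
    unfolding abs_sum_def
    using suminf_le[OF row_le total summable_mult[OF summable_row_sums]] suminf_mult[OF summable_row_sums]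
    by simp
qed

lemma matrix_op_summable:
  assumes "x \<in> l2"
  shows "summable (\<lambda>j. norm (M i j * x j))" and "summable (\<lambda>j. M i j * x j)"
proof -
  show "summable (\<lambda>j. norm (M i j * x j))"
    using weighted_abs_summable(1)[of "\<lambda>i j. cmod (x j)" "l2_norm x"] l2_coord_le[OF assms]
    by (simp add: norm_mult)
  then show "summable (\<lambda>j. M i j * x j)"
    by (rule summable_norm_cancel)
qed

lemma matrix_op_coord_le:
  assumes "x \<in> l2"
  shows "cmod (A x i) \<le> (\<Sum>j. norm (M i j)) * l2_norm x"
proof -
  have "cmod (A x i) \<le> (\<Sum>j. norm (M i j * x j))"
    unfolding matrix_op_def by (rule summable_norm[OF matrix_op_summable(1)[OF assms]])
  also have "\<dots> \<le> (\<Sum>j. norm (M i j) * l2_norm x)"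
    using l2_coord_le[OF assms] matrix_op_summable(1)[OF assms] summable_mult2[OF summable_rows]
    by (intro suminf_le) (simp_all add: norm_mult mult_left_mono)
  also have "\<dots> = (\<Sum>j. norm (M i j)) * l2_norm x"
    by (rule suminf_mult2[OF summable_rows, symmetric])
  finally show ?thesis .
qed

lemma matrix_op_l2:
  assumes x: "x \<in> l2"
  shows "A x \<in> l2" and "l2_norm (A x) \<le> abs_sum * l2_norm x"
proof -
  have "(\<Sum>i<N. (cmod (A x i))\<^sup>2) \<le> (abs_sum * l2_norm x)\<^sup>2" for N
  proof -
    have "(cmod (A x i))\<^sup>2 \<le> (abs_sum * (l2_norm x)\<^sup>2) * (\<Sum>j. norm (M i j))" for i
    proof -
      have "(cmod (A x i))\<^sup>2 \<le> ((\<Sum>j. norm (M i j)) * l2_norm x)\<^sup>2"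
        by (rule power_mono[OF matrix_op_coord_le[OF x] norm_ge_zero])
      also have "\<dots> = ((\<Sum>j. norm (M i j)) * (\<Sum>j. norm (M i j))) * (l2_norm x)\<^sup>2"
        by (simp add: power_mult_distrib power2_eq_square)
      also have "\<dots> \<le> (abs_sum * (\<Sum>j. norm (M i j))) * (l2_norm x)\<^sup>2"
        using summable_rows by (intro mult_right_mono row_sum_le_abs_sum) (simp_all add: suminf_nonneg)
      finally show ?thesis
        by (simp add: mult_ac)
    qed
    then have "(\<Sum>i<N. (cmod (A x i))\<^sup>2) \<le> (abs_sum * (l2_norm x)\<^sup>2) * (\<Sum>i<N. \<Sum>j. norm (M i j))"
      by (simp add: sum_mono sum_distrib_left)
    also have "\<dots> \<le> (abs_sum * (l2_norm x)\<^sup>2) * abs_sum"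
      unfolding abs_sum_def[of] using abs_sum_nonneg summable_row_sums summable_rows
      by (intro mult_left_mono sum_le_suminf) (simp_all add: suminf_nonneg abs_sum_def)
    finally show ?thesis
      by (simp add: power2_eq_square mult_ac)
  qed
  then show "A x \<in> l2" "l2_norm (A x) \<le> abs_sum * l2_norm x"
    using l2_of_bounded_partial_sums[of "A x" "abs_sum * l2_norm x"] abs_sum_nonneg l2_norm_nonneg[OF x]
    by simp_all
qed

lemma matrix_op_lincomb:
  assumes x: "x \<in> l2" and y: "y \<in> l2"
  shows "A (\<lambda>n. a * x n + b * y n) = (\<lambda>n. a * A x n + b * A y n)"
proof
  fix i
  have "A (\<lambda>n. a * x n + b * y n) i = (\<Sum>j. a * (M i j * x j) + b * (M i j * y j))"
    unfolding matrix_op_def by (simp add: algebra_simps)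
  also have "\<dots> = a * A x i + b * A y i"
    unfolding matrix_op_def using matrix_op_summable(2)[OF x] matrix_op_summable(2)[OF y]
    by (simp add: suminf_add[symmetric] summable_mult suminf_mult)
  finally show "A (\<lambda>n. a * x n + b * y n) i = a * A x i + b * A y i" .
qed

lemma matrix_op_bounded: "l2_bounded_op A"
  unfolding l2_bounded_op_def using matrix_op_l2 matrix_op_lincomb by blast

lemma abs_summable_matrix_adjoint: "abs_summable_matrix (adjoint_matrix M)"
  by unfold_locales
    (simp_all add: adjoint_matrix_def summable_column_norms[OF summable_rows summable_row_sums])

lemma matrix_op_adjoint:
  assumes x: "x \<in> l2" and y: "y \<in> l2"
  shows "l2_inner (A x) y = l2_inner x (A_adj y)"
proof -
  let ?f = "\<lambda>i j. M i j * x j * cnj (y i)"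
  have "cmod (x j) * cmod (y i) \<le> l2_norm x * l2_norm y" for i j
    using l2_coord_le[OF x] l2_coord_le[OF y] by (intro mult_mono) (simp_all add: l2_norm_nonneg x)
  then have rows: "summable (\<lambda>j. norm (?f i j))" and total: "summable (\<lambda>i. \<Sum>j. norm (?f i j))" for i
    using weighted_abs_summable(1,2)[of "\<lambda>i j. cmod (x j) * cmod (y i)" "l2_norm x * l2_norm y"]
    by (simp_all add: norm_mult mult.assoc)
  have column: "(\<Sum>i. ?f i j) = x j * cnj (A_adj y j)" for j
  proof -
    have "summable (\<lambda>i. cnj (M i j * cnj (y i)))"
      using abs_summable_matrix.matrix_op_summable(2)[OF abs_summable_matrix_adjoint y, of j]
      by (simp add: adjoint_matrix_def)
    then have "(\<Sum>i. M i j * cnj (y i)) = cnj (A_adj y j)"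
      unfolding matrix_op_def by (simp add: suminf_cnj summable_cnj_iff adjoint_matrix_def)
    moreover have "summable (\<lambda>i. M i j * cnj (y i))"
      using \<open>summable (\<lambda>i. cnj (M i j * cnj (y i)))\<close> summable_cnj_iff[of "\<lambda>i. M i j * cnj (y i)"]
      by simp
    ultimately show ?thesis
      using suminf_mult[of "\<lambda>i. M i j * cnj (y i)" "x j"] by (simp add: mult_ac)
  qed
  have "l2_inner (A x) y = (\<Sum>i. \<Sum>j. ?f i j)"
    unfolding l2_inner_def matrix_op_def using matrix_op_summable(2)[OF x] by (simp add: suminf_mult2)
  also have "\<dots> = (\<Sum>j. \<Sum>i. ?f i j)"
    by (rule abs_summable_double_suminf_swap[OF rows total])
  also have "\<dots> = l2_inner x (A_adj y)"
    unfolding column l2_inner_def ..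
  finally show ?thesis .
qed

lemma matrix_op_has_adjoint: "l2_adjoint A A_adj"
  unfolding l2_adjoint_def
  using abs_summable_matrix.matrix_op_bounded[OF abs_summable_matrix_adjoint] matrix_op_adjoint by blast

lemma inner_matrix_op_adjoint:
  "x \<in> l2 \<Longrightarrow> y \<in> l2 \<Longrightarrow> l2_inner (A_adj x) y = l2_inner x (A y)"
  using abs_summable_matrix.matrix_op_adjoint[OF abs_summable_matrix_adjoint] by simp

lemma matrix_op_weak_lim_coord:
  assumes w: "weak_lim xs z"
  shows "(\<lambda>k. A (xs k) i) \<longlonglongrightarrow> A z i"
  unfolding matrix_op_def
proof (rule conjunct2[OF conjunct2[OF tannerys_theorem]])
  show "(\<lambda>k. M i j * xs k j) \<longlonglongrightarrow> M i j * z j" for j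
    using w unfolding weak_lim_def by (intro tendsto_mult tendsto_const) auto
  have "norm (M i j * xs k j) \<le> norm (M i j)" for j k
  proof -
    have "cmod (xs k j) \<le> 1"
      using w l2_coord_le[of "xs k" j] unfolding weak_lim_def by (meson order_trans)
    then show ?thesis
      by (simp add: norm_mult mult_left_le)
  qed
  then show "\<forall>\<^sub>F (j, k) in at_top \<times>\<^sub>F sequentially. norm (M i j * xs k j) \<le> norm (M i j)"
    by (simp add: always_eventually case_prod_beta)
qed (use summable_rows in simp_all)

lemma matrix_op_weak_lim_norm:
  assumes w: "weak_lim xs z"
  shows "(\<lambda>k. (l2_norm (A (xs k)))\<^sup>2) \<longlonglongrightarrow> (l2_norm (A z))\<^sup>2"
proof -
  have xs: "xs k \<in> l2" "l2_norm (xs k) \<le> 1" for k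
    using w unfolding weak_lim_def by auto
  have "(\<lambda>k. \<Sum>i. (cmod (A (xs k) i))\<^sup>2) \<longlonglongrightarrow> (\<Sum>i. (cmod (A z i))\<^sup>2)"
  proof (rule conjunct2[OF conjunct2[OF tannerys_theorem]])
    show "(\<lambda>k. (cmod (A (xs k) i))\<^sup>2) \<longlonglongrightarrow> (cmod (A z i))\<^sup>2" for i
      by (intro tendsto_power tendsto_norm matrix_op_weak_lim_coord[OF w])
    have "norm ((cmod (A (xs k) i))\<^sup>2) \<le> abs_sum * (\<Sum>j. norm (M i j))" for i k
    proof -
      have "cmod (A (xs k) i) \<le> (\<Sum>j. norm (M i j))"
        using matrix_op_coord_le[OF xs(1)] xs(2) summable_rows
        by (metis mult_left_le suminf_nonneg norm_ge_zero order_trans)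
      then have "(cmod (A (xs k) i))\<^sup>2 \<le> (\<Sum>j. norm (M i j)) * (\<Sum>j. norm (M i j))"
        by (simp add: power2_eq_square mult_mono')
      also have "\<dots> \<le> abs_sum * (\<Sum>j. norm (M i j))"
        using summable_rows by (intro mult_right_mono row_sum_le_abs_sum) (simp add: suminf_nonneg)
      finally show ?thesis
        by simp
    qed
    then show "\<forall>\<^sub>F (i, k) in at_top \<times>\<^sub>F sequentially.
        norm ((cmod (A (xs k) i))\<^sup>2) \<le> abs_sum * (\<Sum>j. norm (M i j))"
      by (simp add: always_eventually case_prod_beta)
    show "summable (\<lambda>i. abs_sum * (\<Sum>j. norm (M i j)))"
      by (rule summable_mult[OF summable_row_sums])
  qed simp
  then show ?thesis
    using l2_norm_square[OF matrix_op_l2(1)[OF xs(1)]] l2_norm_square[OF matrix_op_l2(1)[OF weak_lim_l2(1)[OF w]]]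
    by simp
qed

lemma inner_matrix_op_le:
  assumes e: "e \<in> l2" and f: "f \<in> l2"
  shows "cmod (l2_inner (A e) f) \<le> (\<Sum>i. \<Sum>j. norm (M i j) * (cmod (e j) * cmod (f i)))"
proof -
  have "cmod (e j) * cmod (f i) \<le> l2_norm e * l2_norm f" for i j
    using l2_coord_le[OF e] l2_coord_le[OF f] by (intro mult_mono) (simp_all add: l2_norm_nonneg e)
  note weighted = weighted_abs_summable[of "\<lambda>i j. cmod (e j) * cmod (f i)", OF _ this]
  have "cmod (l2_inner (A e) f) \<le> (\<Sum>i. cmod (A e i * cnj (f i)))"
    unfolding l2_inner_def by (rule summable_norm[OF l2_inner_summable(1)[OF matrix_op_l2(1)[OF e] f]])
  also have "\<dots> = (\<Sum>i. cmod (A e i) * cmod (f i))"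
    by (simp add: norm_mult)
  also have "\<dots> \<le> (\<Sum>i. \<Sum>j. norm (M i j) * (cmod (e j) * cmod (f i)))"
  proof (rule suminf_le)
    show "summable (\<lambda>i. cmod (A e i) * cmod (f i))"
      using l2_cauchy_schwarz(1)[OF matrix_op_l2(1)[OF e] f] .
    show "summable (\<lambda>i. \<Sum>j. norm (M i j) * (cmod (e j) * cmod (f i)))"
      using weighted(2) by simp
    fix i
    have "cmod (A e i) \<le> (\<Sum>j. norm (M i j) * cmod (e j))"
      unfolding matrix_op_def using summable_norm[OF matrix_op_summable(1)[OF e]] by (simp add: norm_mult)
    then have "cmod (A e i) * cmod (f i) \<le> (\<Sum>j. norm (M i j) * cmod (e j)) * cmod (f i)"
      by (rule mult_right_mono) simp
    also have "\<dots> = (\<Sum>j. norm (M i j) * (cmod (e j) * cmod (f i)))"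
      using suminf_mult2[OF matrix_op_summable(1)[OF e, of i], of "cmod (f i)"] by (simp add: norm_mult mult_ac)
    finally show "cmod (A e i) * cmod (f i) \<le> (\<Sum>j. norm (M i j) * (cmod (e j) * cmod (f i)))" .
  qed
  finally show ?thesis .
qed

lemma sum_inner_orthonormal_le:
  assumes I: "finite I" and U: "orthonormal_on U I" and V: "orthonormal_on V I"
  shows "(\<Sum>m\<in>I. cmod (l2_inner (A (U m)) (V m))) \<le> abs_sum"
proof -
  define w where "w i j = (\<Sum>m\<in>I. cmod (U m j) * cmod (V m i))" for i j
  have w_le: "w i j \<le> 1" for i j
  proof -
    have "w i j \<le> L2_set (\<lambda>m. cmod (U m j)) I * L2_set (\<lambda>m. cmod (V m i)) I"
      unfolding w_def using L2_set_mult_ineq[where A = I and f = "\<lambda>m. cmod (U m j)" and g = "\<lambda>m. cmod (V m i)"] by simp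
    also have "\<dots> \<le> 1 * 1"
      unfolding L2_set_def
      using orthonormal_on_coord_square_sum_le[OF I U] orthonormal_on_coord_square_sum_le[OF I V]
      by (intro mult_mono) (simp_all add: sum_nonneg)
    finally show ?thesis
      by simp
  qed
  have coord_le: "cmod (G m j) \<le> 1" if "orthonormal_on G I" "m \<in> I" for G m j
    using l2_coord_le[OF orthonormal_on_l2[OF that], of j] orthonormal_on_norm[OF that] by simp
  have weight_le: "cmod (U m j) * cmod (V m i) \<le> 1" if "m \<in> I" for m i j
    using coord_le[OF U that] coord_le[OF V that] by (simp add: mult_le_one)
  have weighted: "summable (\<lambda>j. norm (M i j) * (cmod (U m j) * cmod (V m i)))"
    "summable (\<lambda>i. \<Sum>j. norm (M i j) * (cmod (U m j) * cmod (V m i)))" if "m \<in> I" for m i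
    using weighted_abs_summable(1,2)[of "\<lambda>i j. cmod (U m j) * cmod (V m i)" 1] weight_le[OF that]
    by simp_all
  have "(\<Sum>m\<in>I. cmod (l2_inner (A (U m)) (V m)))
      \<le> (\<Sum>m\<in>I. \<Sum>i. \<Sum>j. norm (M i j) * (cmod (U m j) * cmod (V m i)))"
    using U V by (intro sum_mono inner_matrix_op_le) (simp_all add: orthonormal_on_l2)
  also have "\<dots> = (\<Sum>i. \<Sum>m\<in>I. \<Sum>j. norm (M i j) * (cmod (U m j) * cmod (V m i)))"
    using weighted(2) by (intro suminf_sum[symmetric]) simp
  also have "\<dots> = (\<Sum>i. \<Sum>j. norm (M i j) * w i j)"
    unfolding w_def sum_distrib_left using weighted(1) by (subst suminf_sum[symmetric]) auto
  also have "\<dots> \<le> 1 * abs_sum"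
    by (rule weighted_abs_summable(3)[OF _ w_le]) (simp add: w_def sum_nonneg)
  finally show ?thesis
    by simp
qed

lemma sum_norm_orthogonal_images_le:
  assumes U: "orthonormal_on U {..<n}"
    and orth: "\<And>m m'. m < n \<Longrightarrow> m' < n \<Longrightarrow> m \<noteq> m' \<Longrightarrow> l2_inner (A (U m)) (A (U m')) = 0"
  shows "(\<Sum>m<n. l2_norm (A (U m))) \<le> abs_sum"
proof -
  define J where "J = {m. m < n \<and> l2_norm (A (U m)) \<noteq> 0}"
  have J: "finite J" "J \<subseteq> {..<n}"
    by (auto simp: J_def)
  have AU: "A (U m) \<in> l2" if "m < n" for m
    using matrix_op_l2(1) orthonormal_on_l2[OF U] that by simp
  have "(\<Sum>m<n. l2_norm (A (U m))) = (\<Sum>m\<in>J. l2_norm (A (U m)))"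
    by (rule sum.mono_neutral_right) (auto simp: J_def)
  also have "\<dots> = (\<Sum>m\<in>J. cmod (l2_inner (A (U m)) (l2_normalize (A (U m)))))"
    using J(2) AU l2_norm_nonneg[OF AU] by (intro sum.cong) (auto simp: l2_inner_normalize)
  also have "\<dots> \<le> abs_sum"
    using AU orth J(2)
    by (intro sum_inner_orthonormal_le J(1) orthonormal_on_subset[OF U J(2)] orthonormal_on_normalize)
      (auto simp: J_def)
  finally show ?thesis .
qed

end

section \<open>Singular vectors\<close>

context abs_summable_matrix
begin

definition kernel_orth :: "(nat \<Rightarrow> nat \<Rightarrow> complex) \<Rightarrow> nat \<Rightarrow> (nat \<Rightarrow> complex) set" where
  "kernel_orth E n = {x \<in> l2_orth E n. A x = (\<lambda>_. 0)}"

lemma matrix_op_zero [simp]: "A (\<lambda>_. 0) = (\<lambda>_. 0)"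
  by (simp add: matrix_op_def)

lemma weakly_closed_subspace_kernel_orth:
  assumes E: "\<And>m. m < n \<Longrightarrow> E m \<in> l2"
  shows "weakly_closed_subspace (kernel_orth E n)"
proof -
  note orth = weakly_closed_subspace_l2_orth[OF E]
  have "l2_subspace (kernel_orth E n)"
    using weakly_closed_subspaceD(1)[OF orth] matrix_op_lincomb
    unfolding l2_subspace_def kernel_orth_def by (auto simp: subset_eq)
  moreover have "z \<in> kernel_orth E n" if w: "weak_lim xs z" and xs: "\<And>k. xs k \<in> kernel_orth E n" for xs z
  proof -
    have "(\<lambda>k. 0) \<longlonglongrightarrow> A z i" for i
      using matrix_op_weak_lim_coord[OF w, of i] xs by (simp add: kernel_orth_def)
    then show ?thesis
      using weakly_closed_subspaceD(2)[OF orth w] xs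
      by (auto simp: kernel_orth_def LIMSEQ_const_iff fun_eq_iff)
  qed
  ultimately show ?thesis
    unfolding weakly_closed_subspace_def by blast
qed

lemma exists_matrix_op_maximizer:
  assumes S: "weakly_closed_subspace S" and u: "u \<in> S" "l2_norm u = 1"
  shows "\<exists>x\<in>S. l2_norm x = 1 \<and> (\<forall>y\<in>S. (l2_norm (A y))\<^sup>2 \<le> (l2_norm (A x))\<^sup>2 * (l2_norm y)\<^sup>2)"
proof (rule exists_unit_maximizer[of S "\<lambda>y. (l2_norm (A y))\<^sup>2" "abs_sum\<^sup>2", OF S _ _ _ _ u])
  note sub = weakly_closed_subspaceD(1)[OF S]
  show "(\<lambda>k. (l2_norm (A (xs k)))\<^sup>2) \<longlonglongrightarrow> (l2_norm (A z))\<^sup>2" if "weak_lim xs z" for xs z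
    by (rule matrix_op_weak_lim_norm[OF that])
  show "(l2_norm (A x))\<^sup>2 \<le> abs_sum\<^sup>2" if "x \<in> S" "l2_norm x \<le> 1" for x
  proof -
    have "l2_norm (A x) \<le> abs_sum"
      using matrix_op_l2(2)[OF l2_subspace_l2[OF sub that(1)]] mult_left_le[OF that(2) abs_sum_nonneg]
      by linarith
    then show ?thesis
      using l2_norm_nonneg[OF matrix_op_l2(1)[OF l2_subspace_l2[OF sub that(1)]]] by (rule power_mono)
  qed
  show "(l2_norm (A (\<lambda>n. complex_of_real c * x n)))\<^sup>2 = c\<^sup>2 * (l2_norm (A x))\<^sup>2" if "x \<in> S" for x c
    using matrix_op_lincomb[OF l2_subspace_l2[OF sub that] l2_subspace_l2[OF sub that], of _ 0]
      l2_norm_scale[OF matrix_op_l2(1)[OF l2_subspace_l2[OF sub that]]]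
    by (simp add: power_mult_distrib)
qed simp

definition gram_eigenvector :: "(nat \<Rightarrow> complex) \<Rightarrow> bool" where
  "gram_eigenvector x \<longleftrightarrow> A_adj (A x) = (\<lambda>i. complex_of_real ((l2_norm (A x))\<^sup>2) * x i)"

lemma gram_eigenvector_inner:
  assumes "gram_eigenvector x" "x \<in> l2" "y \<in> l2"
  shows "l2_inner (A x) (A y) = complex_of_real ((l2_norm (A x))\<^sup>2) * l2_inner x y"
  using inner_matrix_op_adjoint[OF matrix_op_l2(1)[OF assms(2)] assms(3)] assms
  by (simp add: gram_eigenvector_def l2_inner_scale_left)

lemma gram_maps_l2_orth:
  assumes E: "\<And>m. m < n \<Longrightarrow> E m \<in> l2" and eig: "\<And>m. m < n \<Longrightarrow> gram_eigenvector (E m)"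
    and x: "x \<in> l2_orth E n"
  shows "A_adj (A x) \<in> l2_orth E n"
proof -
  have x_l2: "x \<in> l2"
    using x by (simp add: l2_orth_def)
  have "l2_inner (A_adj (A x)) (E m) = 0" if "m < n" for m
  proof -
    have "l2_inner (A_adj (A x)) (E m) = cnj (l2_inner (A (E m)) (A x))"
      using inner_matrix_op_adjoint[OF matrix_op_l2(1)[OF x_l2] E[OF that]]
        l2_inner_cnj[OF matrix_op_l2(1)[OF E[OF that]] matrix_op_l2(1)[OF x_l2]] by simp
    also have "\<dots> = 0"
      using gram_eigenvector_inner[OF eig[OF that] E[OF that] x_l2] x that l2_inner_cnj[OF x_l2 E[OF that]]
      by (simp add: l2_orth_def)
    finally show ?thesis .
  qed
  then show ?thesis
    using abs_summable_matrix.matrix_op_l2(1)[OF abs_summable_matrix_adjoint matrix_op_l2(1)[OF x_l2]]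
    by (simp add: l2_orth_def)
qed

lemma maximizer_gram_eigenvector:
  assumes E: "orthonormal_on E {..<n}" and eig: "\<And>m. m < n \<Longrightarrow> gram_eigenvector (E m)"
    and x: "x \<in> l2_orth E n" "l2_norm x = 1"
    and max: "\<And>y. y \<in> l2_orth E n \<Longrightarrow> (l2_norm (A y))\<^sup>2 \<le> (l2_norm (A x))\<^sup>2 * (l2_norm y)\<^sup>2"
  shows "gram_eigenvector x"
proof -
  have E_l2: "E m \<in> l2" if "m < n" for m
    using E that by (simp add: orthonormal_on_l2)
  note S = l2_subspace_l2_orth[OF E_l2]
  have x_l2: "x \<in> l2"
    by (rule l2_subspace_l2[OF S x(1)])
  define z where "z = (\<lambda>i. 1 * A_adj (A x) i + (- complex_of_real ((l2_norm (A x))\<^sup>2)) * x i)"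
  have z: "z \<in> l2_orth E n"
    unfolding z_def by (intro l2_subspace_lincomb[OF S] gram_maps_l2_orth[OF E_l2 eig x(1)] x(1))
  have "l2_inner z y = 0" if "y \<in> l2_orth E n" for y
  proof -
    have y: "y \<in> l2"
      by (rule l2_subspace_l2[OF S that])
    have "l2_inner z y = 1 * l2_inner (A_adj (A x)) y + (- complex_of_real ((l2_norm (A x))\<^sup>2)) * l2_inner x y"
      unfolding z_def
      by (rule l2_inner_lincomb_left[OF _ x_l2 y])
        (rule abs_summable_matrix.matrix_op_l2(1)[OF abs_summable_matrix_adjoint matrix_op_l2(1)[OF x_l2]])
    then have "l2_inner z y = l2_inner (A x) (A y) - complex_of_real ((l2_norm (A x))\<^sup>2) * l2_inner x y"
      using inner_matrix_op_adjoint[OF matrix_op_l2(1)[OF x_l2] y] by simp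
    then show ?thesis
      using maximizer_inner_eq[where T = A, OF S _ matrix_op_lincomb x max that]
        l2_subspace_l2[OF S] by (simp add: matrix_op_l2)
  qed
  then have "z = (\<lambda>_. 0)"
    using l2_inner_self_eq_zero[OF l2_subspace_l2[OF S z]] z by blast
  then show ?thesis
    unfolding gram_eigenvector_def z_def by (simp add: fun_eq_iff)
qed

text \<open>The singular vectors are chosen one at a time on the orthogonal complement of those chosen
  so far. Even steps maximise \<open>\<parallel>A x\<parallel>\<close>, so the chosen vectors are eigenvectors of \<open>A\<^sup>* A\<close> and every
  vector orthogonal to all of them lies in the kernel of \<open>A\<close>. Odd steps, when possible, take a
  kernel vector absorbing coordinate \<open>n div 2\<close>, so that a kernel vector orthogonal to all of them
  vanishes, however large the kernel is.\<close>

definition next_singular_vector :: "(nat \<Rightarrow> nat \<Rightarrow> complex) \<Rightarrow> nat \<Rightarrow> (nat \<Rightarrow> complex) \<Rightarrow> bool" where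
  "next_singular_vector E n x \<longleftrightarrow> x \<in> l2_orth E n \<and> l2_norm x = 1 \<and> gram_eigenvector x
     \<and> (even n \<longrightarrow> (\<forall>y\<in>l2_orth E n. (l2_norm (A y))\<^sup>2 \<le> (l2_norm (A x))\<^sup>2 * (l2_norm y)\<^sup>2))
     \<and> (odd n \<longrightarrow> (\<forall>y\<in>kernel_orth E n. l2_inner y x = 0 \<longrightarrow> y (n div 2) = 0))"

lemma next_singular_vector_cong:
  assumes "\<And>m. m < n \<Longrightarrow> E m = E' m"
  shows "next_singular_vector E n x = next_singular_vector E' n x"
proof -
  have "l2_orth E n = l2_orth E' n"
    using assms by (auto simp: l2_orth_def)
  then show ?thesis
    by (simp add: next_singular_vector_def kernel_orth_def)
qed

lemma orthonormal_on_next_singular_vectors: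
  assumes "\<And>m. m < n \<Longrightarrow> next_singular_vector E m (E m)"
  shows "orthonormal_on E {..<n}"
proof -
  have E: "E m \<in> l2" "l2_norm (E m) = 1" "\<forall>k<m. l2_inner (E m) (E k) = 0" if "m < n" for m
    using assms[OF that] by (auto simp: next_singular_vector_def l2_orth_def)
  have "l2_inner (E m) (E m') = (if m = m' then 1 else 0)" if "m < n" "m' < n" for m m'
  proof (cases m m' rule: linorder_cases)
    case less
    then show ?thesis
      using E that l2_inner_cnj[of "E m'" "E m"] by force
  next
    case equal
    then show ?thesis
      using E(1,2)[OF that(1)] l2_inner_self by simp
  next
    case greater
    then show ?thesis
      using E that by simp
  qed
  then show ?thesis
    using E(1) by (simp add: orthonormal_on_def)
qed

lemma exists_next_singular_vector:
  assumes prev: "\<And>m. m < n \<Longrightarrow> next_singular_vector E m (E m)"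
  shows "\<exists>x. next_singular_vector E n x"
proof -
  have E: "orthonormal_on E {..<n}"
    using orthonormal_on_next_singular_vectors[of n E] prev by blast
  have E_l2: "E m \<in> l2" if "m < n" for m
    using E that by (simp add: orthonormal_on_l2)
  show ?thesis
  proof (cases "odd n \<and> (\<exists>y\<in>kernel_orth E n. y (n div 2) \<noteq> 0)")
    case True
    then obtain x where x: "x \<in> kernel_orth E n" "l2_norm x = 1"
      and absorbs: "\<forall>y\<in>kernel_orth E n. l2_inner y x = 0 \<longrightarrow> y (n div 2) = 0"
      using exists_coordinate_absorbing_vector[OF weakly_closed_subspace_kernel_orth[of n E, OF E_l2]] by blast
    then have "gram_eigenvector x"
      by (simp add: kernel_orth_def gram_eigenvector_def abs_summable_matrix.matrix_op_zero[OF abs_summable_matrix_adjoint])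
    then show ?thesis
      using True x absorbs by (auto simp: next_singular_vector_def kernel_orth_def)
  next
    case False
    obtain u where "u \<in> l2_orth E n" "l2_norm u = 1"
      using exists_unit_orthogonal[OF E] by blast
    then obtain x where x: "x \<in> l2_orth E n" "l2_norm x = 1"
      and max: "\<forall>y\<in>l2_orth E n. (l2_norm (A y))\<^sup>2 \<le> (l2_norm (A x))\<^sup>2 * (l2_norm y)\<^sup>2"
      using exists_matrix_op_maximizer[OF weakly_closed_subspace_l2_orth[of n E, OF E_l2]] by blast
    moreover have "gram_eigenvector x"
      using maximizer_gram_eigenvector[OF E _ x] prev max by (simp add: next_singular_vector_def)
    ultimately show ?thesis
      using False by (auto simp: next_singular_vector_def)
  qed
qed

lemma exists_singular_vector_seq: "\<exists>e. \<forall>n. next_singular_vector e n (e n)"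
proof -
  let ?P = "\<lambda>n E. \<forall>m<n. next_singular_vector E m (E m)"
  let ?Q = "\<lambda>n E E'. \<forall>m<n. E' m = E m"
  have step: "?P (Suc n) (E(n := x)) \<and> ?Q n E (E(n := x))"
    if "?P n E" "next_singular_vector E n x" for n E x
    using that next_singular_vector_cong[of _ E "E(n := x)"] by (auto simp: less_Suc_eq)
  have "\<exists>f. \<forall>n. ?P n (f n) \<and> ?Q n (f n) (f (Suc n))"
  proof (rule dependent_nat_choice)
    show "\<exists>y. ?P (Suc n) y \<and> ?Q n E y" if "?P n E" for E n
      using step[OF that] exists_next_singular_vector[of n E] that by blast
  qed simp
  then obtain f where f: "\<And>n. ?P n (f n)" "\<And>n. ?Q n (f n) (f (Suc n))"
    by blast
  have stable: "f k m = f (Suc m) m" if "m < k" for k m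
    using that
  proof (induction k)
    case (Suc k)
    then show ?case
      using f(2)[of k] by (cases "m = k") auto
  qed simp
  have "next_singular_vector (\<lambda>n. f (Suc n) n) n (f (Suc n) n)" for n
  proof -
    have "next_singular_vector (f (Suc n)) n (f (Suc n) n)"
      using f(1)[of "Suc n"] by blast
    moreover have "f (Suc n) m = f (Suc m) m" if "m < n" for m
      using stable[of m "Suc n"] that by simp
    ultimately show ?thesis
      using next_singular_vector_cong[of n "f (Suc n)" "\<lambda>n. f (Suc n) n"] by simp
  qed
  then show ?thesis
    by blast
qed

context
  fixes e :: "nat \<Rightarrow> nat \<Rightarrow> complex"
  assumes singular: "\<And>n. next_singular_vector e n (e n)"
begin

lemma singular_orthonormal_on: "orthonormal_on e {..<n}"
  using orthonormal_on_next_singular_vectors[of n e] singular by blast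

lemma singular_orthonormal_seq: "orthonormal_seq e"
proof
  show "e n \<in> l2" for n
    using singular_orthonormal_on[of "Suc n"] by (simp add: orthonormal_on_l2)
  show "l2_inner (e m) (e n) = (if m = n then 1 else 0)" for m n
    using singular_orthonormal_on[of "Suc (max m n)"] by (simp add: orthonormal_on_def less_Suc_eq_le)
qed

interpretation orthonormal_seq e
  by (rule singular_orthonormal_seq)

lemma singular_gram_eigenvector: "gram_eigenvector (e n)"
  using singular[of n] by (simp add: next_singular_vector_def)

lemma summable_singular_values: "summable (\<lambda>n. l2_norm (A (e n)))"
proof (rule bounded_imp_summable)
  show "0 \<le> l2_norm (A (e n))" for n
    by (rule l2_norm_nonneg[OF matrix_op_l2(1)[OF l2]])
  fix n
  have "(\<Sum>k<Suc n. l2_norm (A (e k))) \<le> abs_sum"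
    using singular_orthonormal_on gram_eigenvector_inner[OF singular_gram_eigenvector l2 l2] orthonormal
    by (intro sum_norm_orthogonal_images_le) simp_all
  then show "(\<Sum>k\<le>n. l2_norm (A (e k))) \<le> abs_sum"
    by (simp add: lessThan_Suc_atMost)
qed

lemma singular_complete:
  assumes x: "x \<in> l2" and orth: "\<And>n. l2_inner x (e n) = 0"
  shows "x = (\<lambda>_. 0)"
proof -
  have x_orth: "x \<in> l2_orth e n" for n
    using x orth by (simp add: l2_orth_def)
  have "(\<lambda>k. l2_norm (A (e (2 * k)))) \<longlonglongrightarrow> 0"
    using LIMSEQ_subseq_LIMSEQ[OF summable_LIMSEQ_zero[OF summable_singular_values], of "\<lambda>k. 2 * k"]
    by (simp add: strict_mono_def o_def)
  then have "(\<lambda>k. (l2_norm (A (e (2 * k))))\<^sup>2 * (l2_norm x)\<^sup>2) \<longlonglongrightarrow> 0\<^sup>2 * (l2_norm x)\<^sup>2"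
    by (intro tendsto_mult tendsto_power tendsto_const)
  moreover have "(l2_norm (A x))\<^sup>2 \<le> (l2_norm (A (e (2 * k))))\<^sup>2 * (l2_norm x)\<^sup>2" for k
    using singular[of "2 * k"] x_orth by (simp add: next_singular_vector_def)
  ultimately have "(l2_norm (A x))\<^sup>2 \<le> 0\<^sup>2 * (l2_norm x)\<^sup>2"
    using LIMSEQ_le_const by blast
  then have "A x = (\<lambda>_. 0)"
    using l2_norm_eq_zero[OF matrix_op_l2(1)[OF x]] by simp
  then have "x \<in> kernel_orth e n" for n
    using x_orth by (simp add: kernel_orth_def)
  then have "x c = 0" for c
    using singular[of "Suc (2 * c)"] orth by (simp add: next_singular_vector_def)
  then show ?thesis
    by auto
qed

lemma gram_eq_diag_op:
  assumes x: "x \<in> l2"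
  shows "A_adj (A x) = diag_op e (\<lambda>n. l2_norm (A (e n)) * l2_norm (A (e n))) x"
proof (rule eq_diag_op_if_inner_basis[OF singular_complete _ x])
  show "summable (\<lambda>n. \<bar>l2_norm (A (e n)) * l2_norm (A (e n))\<bar>)"
  proof (rule summable_comparison_test'[OF summable_mult[OF summable_singular_values]])
    fix n
    have nonneg: "0 \<le> l2_norm (A (e k))" for k
      by (rule l2_norm_nonneg[OF matrix_op_l2(1)[OF l2]])
    have "l2_norm (A (e n)) \<le> (\<Sum>n. l2_norm (A (e n)))"
      by (rule suminf_ge_term[OF summable_singular_values nonneg])
    then show "norm \<bar>l2_norm (A (e n)) * l2_norm (A (e n))\<bar> \<le> (\<Sum>n. l2_norm (A (e n))) * l2_norm (A (e n))"
      using nonneg[of n] by (simp add: mult_right_mono)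
  qed
  show "A_adj (A x) \<in> l2"
    using abs_summable_matrix.matrix_op_l2(1)[OF abs_summable_matrix_adjoint matrix_op_l2(1)[OF x]] .
  show "l2_inner (A_adj (A x)) (e n) =
      complex_of_real (l2_norm (A (e n)) * l2_norm (A (e n))) * l2_inner x (e n)" for n
  proof -
    have "l2_inner (A_adj (A x)) (e n) = cnj (l2_inner (A (e n)) (A x))"
      using inner_matrix_op_adjoint[OF matrix_op_l2(1)[OF x] l2]
        l2_inner_cnj[OF matrix_op_l2(1)[OF l2] matrix_op_l2(1)[OF x]] by simp
    then show ?thesis
      using gram_eigenvector_inner[OF singular_gram_eigenvector l2 x] l2_inner_cnj[OF l2 x]
      by (simp add: power2_eq_square)
  qed
qed

end

theorem trace_class_matrix_op: "(\<forall>x\<in>l2. \<forall>i. summable (\<lambda>j. M i j * x j)) \<and> trace_class A"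
proof -
  obtain e where singular: "\<And>n. next_singular_vector e n (e n)"
    using exists_singular_vector_seq by blast
  interpret orthonormal_seq e
    by (rule singular_orthonormal_seq[OF singular])
  define \<sigma> where "\<sigma> n = l2_norm (A (e n))" for n
  have \<sigma>: "summable \<sigma>" "\<And>n. 0 \<le> \<sigma> n"
    unfolding \<sigma>_def using summable_singular_values[OF singular] l2_norm_nonneg[OF matrix_op_l2(1)[OF l2]]
    by auto
  then have \<sigma>_abs: "summable (\<lambda>n. \<bar>\<sigma> n\<bar>)"
    by simp
  let ?P = "diag_op e \<sigma>"
  have "\<forall>x\<in>l2. ?P (?P x) = A_adj (A x)"
    using diag_op_compose[OF \<sigma>_abs] gram_eq_diag_op[OF singular] unfolding \<sigma>_def by simp
  then have "l2_abs_op A ?P"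
    unfolding l2_abs_op_def using diag_op_positive[OF \<sigma>_abs \<sigma>(2)] matrix_op_has_adjoint by blast
  moreover have "l2_discrete_summable ?P"
    unfolding l2_discrete_summable_def l2_onb_def
    using l2 orthonormal singular_complete[OF singular] diag_op_eigenvector[OF \<sigma>_abs] \<sigma>(1) by blast
  ultimately show ?thesis
    unfolding trace_class_def using matrix_op_summable(2) matrix_op_bounded by blast
qed

end

section \<open>The matrix \<open>R\<close>\<close>

lemma prime_seq_prime: "prime (prime_seq n)"
  unfolding prime_seq_def using enumerate_in_set[OF primes_infinite] by simp

lemma prime_seq_ge: "n + 2 \<le> prime_seq n"
proof (induction n)
  case 0
  then show ?case
    using prime_ge_2_nat[OF prime_seq_prime[of 0]] by simp
next
  case (Suc n)
  have "prime_seq n < prime_seq (Suc n)"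
    unfolding prime_seq_def by (rule enumerate_mono[OF _ primes_infinite]) simp
  then show ?case
    using Suc.IH by simp
qed

lemma double_le_two_power: "2 * p \<le> (2::nat) ^ p"
proof (induction p)
  case (Suc p)
  then show ?case
    using one_le_power[of "2::nat" p] by (cases "p = 0") auto
qed simp

lemma double_power_le_two_power:
  fixes p :: nat
  assumes p: "2 \<le> p"
  shows "(2 * p) ^ k \<le> 2 ^ (p ^ Suc k - p)"
proof (induction k)
  case (Suc k)
  have pk: "p \<le> p ^ Suc k"
    using p by (simp add: self_le_power)
  have "2 * p ^ Suc k \<le> p ^ Suc (Suc k)"
    using mult_right_mono[OF p, of "p ^ Suc k"] by (simp del: power_Suc add: power_Suc[of p "Suc k"])
  then have exponent: "p ^ Suc k \<le> p ^ Suc (Suc k) - p"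
    using pk by linarith
  have "(2 * p) ^ Suc k = (2 * p) * (2 * p) ^ k"
    by simp
  also have "\<dots> \<le> 2 ^ p * 2 ^ (p ^ Suc k - p)"
    by (intro mult_mono double_le_two_power Suc.IH) simp_all
  also have "\<dots> = 2 ^ (p ^ Suc k)"
    using pk by (simp flip: power_add)
  also have "\<dots> \<le> 2 ^ (p ^ Suc (Suc k) - p)"
    using exponent by (intro power_increasing) simp_all
  finally show ?case .
qed simp

lemma power_le_power_tower:
  fixes p q :: nat
  assumes p: "2 \<le> p" and q: "2 \<le> q"
  shows "p ^ k * q ^ p * 2 ^ k \<le> q ^ (p ^ Suc k)"
proof -
  have pk: "p \<le> p ^ Suc k"
    using p by (simp add: self_le_power)
  have "p ^ k * q ^ p * 2 ^ k = q ^ p * (2 * p) ^ k"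
    by (simp add: power_mult_distrib mult_ac)
  also have "\<dots> \<le> q ^ p * 2 ^ (p ^ Suc k - p)"
    using double_power_le_two_power[OF p] by simp
  also have "\<dots> \<le> q ^ p * q ^ (p ^ Suc k - p)"
    using q by (intro mult_left_mono power_mono) simp_all
  also have "\<dots> = q ^ (p ^ Suc k)"
    using pk by (simp flip: power_add)
  finally show ?thesis .
qed

lemma F_summand_bound:
  fixes p q k :: nat
  assumes p: "2 \<le> p" and q: "2 \<le> q"
  defines "u \<equiv> real q powr (- (real p ^ Suc k))"
  shows "0 \<le> real p ^ k * u / (1 - u)\<^sup>2"
    and "real p ^ k * u / (1 - u)\<^sup>2 \<le> 2 / real (q ^ p) * (1 / 2) ^ k"
proof -
  define N where "N = q ^ (p ^ Suc k)"
  have "u = 1 / real N"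
    using q unfolding u_def N_def by (simp add: powr_minus powr_realpow[symmetric] divide_inverse)
  moreover have "2 ^ 2 \<le> N"
  proof -
    have "2 \<le> p ^ Suc k"
      using p self_le_power[of p "Suc k"] by linarith
    then show ?thesis
      unfolding N_def using q by (intro order.trans[OF power_mono power_increasing]) simp_all
  qed
  then have N: "4 \<le> real N"
    by simp
  ultimately have u: "0 < u" "u \<le> 1 / 4"
    by (simp_all add: divide_left_mono)
  then show "0 \<le> real p ^ k * u / (1 - u)\<^sup>2"
    by simp
  have tower: "real (p ^ k * q ^ p * 2 ^ k) \<le> real N"
    unfolding N_def of_nat_le_iff by (rule power_le_power_tower[OF p q])
  have "real p ^ k * u = real p ^ k / real N"
    by (simp add: \<open>u = 1 / real N\<close>)
  also have "\<dots> \<le> 1 / (real (q ^ p) * 2 ^ k)"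
    using tower N q by (simp add: field_simps)
  finally have "real p ^ k * u \<le> 1 / (real (q ^ p) * 2 ^ k)" .
  moreover have "9 / 16 \<le> (1 - u)\<^sup>2"
    using power_mono[of "3 / 4" "1 - u" 2] u by (simp add: power2_eq_square)
  ultimately have "real p ^ k * u / (1 - u)\<^sup>2 \<le> (1 / (real (q ^ p) * 2 ^ k)) / (9 / 16)"
    using u by (intro frac_le) simp_all
  also have "\<dots> \<le> 2 / real (q ^ p) * (1 / 2) ^ k"
    using q by (simp add: field_simps power_one_over)
  finally show "real p ^ k * u / (1 - u)\<^sup>2 \<le> 2 / real (q ^ p) * (1 / 2) ^ k" .
qed

lemma F_bound:
  fixes p q :: nat
  assumes p: "2 \<le> p" and q: "2 \<le> q"
  shows "0 \<le> F (real p) (real q)" and "F (real p) (real q) \<le> 4 / real (q ^ p)"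
proof -
  let ?f = "\<lambda>k. real p ^ k * (real q powr (- (real p ^ Suc k))) / (1 - real q powr (- (real p ^ Suc k)))\<^sup>2"
  let ?g = "\<lambda>k. 2 / real (q ^ p) * (1 / 2 :: real) ^ k"
  have g: "summable ?g"
    by (intro summable_mult summable_geometric) simp
  have f: "summable ?f"
    by (rule summable_comparison_test'[OF g]) (use F_summand_bound[OF p q] in simp)
  show "0 \<le> F (real p) (real q)"
    unfolding F_def using F_summand_bound(1)[OF p q] by (intro suminf_nonneg[OF f]) simp
  have "F (real p) (real q) \<le> (\<Sum>k. ?g k)"
    unfolding F_def using F_summand_bound(2)[OF p q] by (intro suminf_le[OF _ f g]) simp
  also have "\<dots> = 4 / real (q ^ p)"
    using suminf_mult[OF summable_geometric[of "1 / 2 :: real"], of "2 / real (q ^ p)"]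
      suminf_geometric[of "1 / 2 :: real"]
    by simp
  finally show "F (real p) (real q) \<le> 4 / real (q ^ p)" .
qed

lemma QNC_bound:
  fixes p q :: nat
  assumes p: "2 \<le> p" and q: "2 \<le> q"
  shows "\<bar>QNC (real p) (real q)\<bar> \<le> 1 / real (q ^ p) + 1 / real (p ^ q)"
proof -
  let ?x = "real p" and ?y = "real q"
  note F1 = F_bound[OF p q] and F2 = F_bound[OF q p]
  have "\<bar>?x * (?y - 1) * F ?x ?y - ?y * (?x - 1) * F ?y ?x\<bar>
      \<le> ?x * (?y - 1) * F ?x ?y + ?y * (?x - 1) * F ?y ?x"
    using p q F1 F2 by (intro abs_triangle_ineq4[THEN order.trans]) simp
  also have "\<dots> \<le> ?x * ?y * F ?x ?y + ?y * ?x * F ?y ?x"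
    using p q F1 F2 by (intro add_mono mult_right_mono mult_left_mono) simp_all
  finally have "\<bar>QNC ?x ?y\<bar> \<le> (F ?x ?y + F ?y ?x) / 12"
    using p q unfolding QNC_def by (simp add: abs_divide divide_le_eq algebra_simps)
  also have "\<dots> \<le> 1 / real (q ^ p) + 1 / real (p ^ q)"
    using F1 F2 by simp
  finally show ?thesis .
qed

lemma inverse_prime_seq_power_le:
  "1 / real (prime_seq j ^ prime_seq i) \<le> 1 / real ((j + 2)\<^sup>2) * (1 / 2) ^ i"
proof -
  define p q where "p = prime_seq i" and "q = prime_seq j"
  have p: "i + 2 \<le> p" and q: "j + 2 \<le> q"
    unfolding p_def q_def by (rule prime_seq_ge)+
  have "(j + 2)\<^sup>2 * 2 ^ i \<le> q\<^sup>2 * q ^ (p - 2)"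
  proof (rule mult_mono)
    have "(2::nat) ^ i \<le> 2 ^ (p - 2)"
      using p by (intro power_increasing) simp_all
    also have "\<dots> \<le> q ^ (p - 2)"
      using q by (intro power_mono) simp_all
    finally show "2 ^ i \<le> q ^ (p - 2)" .
  qed (use q in \<open>simp_all add: power_mono\<close>)
  also have "\<dots> = q ^ (2 + (p - 2))"
    by (rule power_add[symmetric])
  also have "\<dots> = q ^ p"
    using p by (simp only: le_add_diff_inverse[of 2 p])
  finally have "real ((j + 2)\<^sup>2 * 2 ^ i) \<le> real (q ^ p)"
    by (simp only: of_nat_le_iff)
  then have "1 / real (q ^ p) \<le> 1 / real ((j + 2)\<^sup>2 * 2 ^ i)"
    using q by (intro divide_left_mono) simp_all
  then show ?thesis
    unfolding p_def q_def by (simp add: power_one_over)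
qed

lemma abs_summable_matrix_if_rank_one_bound:
  assumes bound: "\<And>i j. norm (M i j) \<le> c i * c j"
    and c: "summable c" "\<And>n. 0 \<le> c n"
  shows "abs_summable_matrix M"
proof
  show rows: "summable (\<lambda>j. norm (M i j))" for i
    by (rule summable_comparison_test'[OF summable_mult[OF c(1)]]) (use bound in simp)
  have "(\<Sum>j. norm (M i j)) \<le> c i * suminf c" for i
    using suminf_le[OF bound rows summable_mult[OF c(1)]] suminf_mult[OF c(1)] by simp
  then show "summable (\<lambda>i. \<Sum>j. norm (M i j))"
    using rows by (intro summable_comparison_test'[OF summable_mult2[OF c(1)]]) (simp add: suminf_nonneg)
qed

lemma abs_summable_matrix_Rmat: "abs_summable_matrix Rmat"
proof -
  define a where "a n = 1 / real ((n + 2)\<^sup>2)" for n :: nat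
  define b where "b n = (1 / 2 :: real) ^ n" for n :: nat
  have a: "summable a" "\<And>n. 0 \<le> a n"
    unfolding a_def
    using inverse_power_summable[of 2, where 'a = real] summable_iff_shift[of "\<lambda>n. inverse (real n ^ 2)" 2]
    by (simp_all add: divide_inverse)
  have b: "summable b" "\<And>n. 0 \<le> b n"
    unfolding b_def by (simp_all add: summable_geometric)
  show ?thesis
  proof (rule abs_summable_matrix_if_rank_one_bound)
    show "summable (\<lambda>n. a n + b n)" "0 \<le> a n + b n" for n
      using a b by (simp_all add: summable_add add_nonneg_nonneg)
    show "norm (Rmat i j) \<le> (a i + b i) * (a j + b j)" for i j
    proof -
      have "norm (Rmat i j) \<le> 1 / real (prime_seq j ^ prime_seq i) + 1 / real (prime_seq i ^ prime_seq j)"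
        unfolding Rmat_def using QNC_bound prime_seq_ge[of i] prime_seq_ge[of j] by simp
      also have "\<dots> \<le> a j * b i + a i * b j"
        unfolding a_def b_def by (intro add_mono inverse_prime_seq_power_le)
      also have "\<dots> \<le> (a i + b i) * (a j + b j)"
        using mult_nonneg_nonneg[OF a(2) a(2), of i j] mult_nonneg_nonneg[OF b(2) b(2), of i j]
        by (simp add: algebra_simps)
      finally show ?thesis .
    qed
  qed
qed

theorem theorem2p1:
  shows "(\<forall>x\<in>l2. \<forall>i. summable (\<lambda>j. Rmat i j * x j)) \<and> trace_class (matrix_op Rmat)"
  by (rule abs_summable_matrix.trace_class_matrix_op[OF abs_summable_matrix_Rmat])

end
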